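(* Consider the draining problem described in the context. Let $u^\ast$ be an optimal control with optimal cost $T^\ast$ and uncertainty trajectory $R^\ast$, and assume there exists a nonempty open interval $(t_1,t_2)$ such that $R^\ast(t)=0$ for all $t\in(t_1,t_2)$. Then $T^\ast=\|s^\psi-s^\varphi\|$ and $$u^\ast(t)=\frac{s^\psi-s^\varphi}{T^\ast}\quad\text{for all }t\in[0,T^\ast].$$
   Context: $\|\cdot\|$ is the Euclidean norm. A single target sits at the fixed position $x\in\mathbb{R}^2$, with sensing range $r>0$ and constants $A,B$ with $B>A$. The agent has position $s(t)\in\mathbb{R}^2$ with dynamics $\dot s(t)=u(t)$ and control constraint $\|u(t)\|\le 1$. Define $p(s)=\max\{0,\,1-\|s-x\|^2/r^2\}$ and $f_R(R,s)=0$ if $R=0$ and $A-Bp(s)<0$, and $f_R(R,s)=A-Bp(s)$ otherwise. Given entrance point $s^\varphi$, departure point $s^\psi$ (points where the agent starts/stops sensing the target) and arrival uncertainty $\check R$, the draining problem is: minimize $T$ over $T$ and controls $u:[0,T]\to\mathbb{R}^2$ subject to $\dot s=u$, $\dot R=f_R(R,s)$, $\|u(t)\|^2\le1$, $\min_{\tau\in[0,T]}R(\tau)=0$, $s(0)=s^\varphi$, $s(T)=s^\psi$, $R(0)=\check R$. An optimal control is a minimizer. *)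

theory Defs
  imports "HOL-Analysis.Analysis"
begin

type_synonym pt = "real ^ 2"

definition sens_p :: "pt \<Rightarrow> real \<Rightarrow> pt \<Rightarrow> real" where
  "sens_p x r s = max 0 (1 - (norm (s - x))\<^sup>2 / r\<^sup>2)"

definition f_R :: "real \<Rightarrow> real \<Rightarrow> pt \<Rightarrow> real \<Rightarrow> real \<Rightarrow> pt \<Rightarrow> real" where
  "f_R A B x r R s =
     (if R = 0 \<and> A - B * sens_p x r s < 0 then 0 else A - B * sens_p x r s)"

text \<open>The state equation
  for s is understood classically (derivative u(t) at every t in [0,T]); the
  state equation for R (discontinuous right-hand side) is understood in
  integral (Caratheodory) form R(t) = R(0) + integral_0^t f_R(R,s).\<close>
definition draining_feasible ::
  "real \<Rightarrow> real \<Rightarrow> pt \<Rightarrow> real \<Rightarrow> pt \<Rightarrow> pt \<Rightarrow> real \<Rightarrow>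
   real \<Rightarrow> (real \<Rightarrow> pt) \<Rightarrow> (real \<Rightarrow> pt) \<Rightarrow> (real \<Rightarrow> real) \<Rightarrow> bool" where
  "draining_feasible A B x r s_phi s_psi R0 T u s R \<longleftrightarrow>
     0 \<le> T \<and>
     (\<forall>t\<in>{0..T}. (s has_vector_derivative u t) (at t within {0..T})) \<and>
     (\<forall>t\<in>{0..T}. ((\<lambda>\<tau>. f_R A B x r (R \<tau>) (s \<tau>)) has_integral (R t - R 0)) {0..t}) \<and>
     (\<forall>t\<in>{0..T}. (norm (u t))\<^sup>2 \<le> 1) \<and>
     (\<forall>\<tau>\<in>{0..T}. 0 \<le> R \<tau>) \<and> (\<exists>\<tau>\<in>{0..T}. R \<tau> = 0) \<and>
     s 0 = s_phi \<and> s T = s_psi \<and> R 0 = R0"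

definition draining_optimal ::
  "real \<Rightarrow> real \<Rightarrow> pt \<Rightarrow> real \<Rightarrow> pt \<Rightarrow> pt \<Rightarrow> real \<Rightarrow>
   real \<Rightarrow> (real \<Rightarrow> pt) \<Rightarrow> (real \<Rightarrow> pt) \<Rightarrow> (real \<Rightarrow> real) \<Rightarrow> bool" where
  "draining_optimal A B x r s_phi s_psi R0 T u s R \<longleftrightarrow>
     draining_feasible A B x r s_phi s_psi R0 T u s R \<and>
     (\<forall>T' u' s' R'. draining_feasible A B x r s_phi s_psi R0 T' u' s' R' \<longrightarrow> T \<le> T')"

end

theory Submission
  imports Defs
begin

text \<open>Let \<open>U(t) = R0 + \<integral>\<^sub>0\<^sup>t (A - B p(s))\<close> (\<open>unreflected\<close> below) be the uncertainty the agent
  would have if it were allowed to become negative, so that \<open>U \<le> R\<close>. Conversely, whenever \<open>U\<close>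
  reaches \<open>0\<close> along some path, the Skorokhod reflection of \<open>U\<close> at \<open>0\<close> is an admissible
  uncertainty trajectory, so an optimal path can be compared with every competitor path that
  drains the target.

  If \<open>U(t0) < 0\<close> somewhere, mixing a little of the straight segment from \<open>s_phi\<close> to \<open>s_psi\<close>
  into the path and running the result faster still drains the target, and is strictly faster
  unless the path already is that segment run at unit speed. If \<open>U \<ge> 0\<close>, then \<open>R = 0\<close> on
  \<open>(t1, t2)\<close> forces \<open>U = 0\<close> and \<open>B p(s) = A\<close> there; from then on the path must run straight to
  \<open>s_psi\<close> at unit speed, since otherwise a shortcut would be faster. This is impossible: for
  \<open>A > 0\<close> the distance to the target would be constant along a segment, and for \<open>A = 0\<close> the
  path would have to reach the circle along a chord while staying outside the sensing disk.\<close>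

section \<open>Functions with derivative zero off a countable set\<close>

lemma deriv_zero_off_countable_imp_le:
  fixes H :: "real \<Rightarrow> real"
  assumes "a \<le> b" and cont: "continuous_on {a..b} H" and "countable K"
    and deriv: "\<And>x. x \<in> {a<..<b} - K \<Longrightarrow> (H has_real_derivative 0) (at x)"
  shows "H b \<le> H a"
proof (rule ccontr)
  assume "\<not> H b \<le> H a"
  then have d: "0 < H b - H a" by simp
  then have "a < b" using \<open>a \<le> b\<close> by (cases "a = b") auto
  define \<epsilon> where "\<epsilon> = (H b - H a) / (2 * (b - a))"
  have "0 < \<epsilon>" using d \<open>a < b\<close> by (simp add: \<epsilon>_def)
  define \<phi> where "\<phi> x = H x - H a - \<epsilon> * (x - a)" for x
  have \<phi>_a: "\<phi> a = 0" and \<phi>_b: "\<phi> b = (H b - H a) / 2"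
    using \<open>a < b\<close> by (simp_all add: \<phi>_def \<epsilon>_def field_simps)
  have cont_\<phi>: "continuous_on {a..b} \<phi>" unfolding \<phi>_def by (intro continuous_intros cont)
  text \<open>A level \<open>y\<close> of \<open>\<phi>\<close> avoided by the countable set \<open>\<phi> ` K\<close>; the last point where \<open>\<phi>\<close> takes
    the value \<open>y\<close> then has \<open>\<phi>' = -\<epsilon> < 0\<close>, so \<open>\<phi>\<close> drops below \<open>y\<close> and must cross it again later.\<close>
  have "uncountable {0<..<(H b - H a) / 2}" using d by (simp add: uncountable_open_interval)
  then have "\<not> {0<..<(H b - H a) / 2} \<subseteq> \<phi> ` K"
    using countable_subset \<open>countable K\<close> by blast
  then obtain y where y: "y \<in> {0<..<(H b - H a) / 2}" "y \<notin> \<phi> ` K" by blast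
  define S where "S = {x \<in> {a..b}. \<phi> x = y}"
  have "S \<noteq> {}"
    using IVT'[of \<phi> a y b] \<phi>_a \<phi>_b y \<open>a \<le> b\<close> cont_\<phi> by (auto simp: S_def)
  moreover have bdd: "bdd_above S" by (auto simp: S_def bdd_above_def)
  moreover have "closed S"
    unfolding S_def by (rule continuous_closed_preimage_constant[OF cont_\<phi>]) simp
  ultimately have x0: "Sup S \<in> S" by (rule closed_contains_Sup)
  define x0 where "x0 = Sup S"
  have "x0 \<in> {a..b}" "\<phi> x0 = y" using x0 by (auto simp: S_def x0_def)
  moreover have "x0 \<noteq> a" "x0 \<noteq> b" using \<open>\<phi> x0 = y\<close> \<phi>_a \<phi>_b y(1) by auto
  ultimately have "a < x0" "x0 < b" "\<phi> x0 = y" by auto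
  then have "x0 \<notin> K" using y(2) by blast
  have "(\<phi> has_real_derivative 0 - 0 - \<epsilon> * (1 - 0)) (at x0)"
    unfolding \<phi>_def using deriv \<open>a < x0\<close> \<open>x0 < b\<close> \<open>x0 \<notin> K\<close>
    by (intro derivative_eq_intros) auto
  then obtain \<delta> where "0 < \<delta>" and drop: "\<And>h. 0 < h \<Longrightarrow> h < \<delta> \<Longrightarrow> \<phi> (x0 + h) < \<phi> x0"
    using DERIV_neg_dec_right[of \<phi> "- \<epsilon>" x0] \<open>0 < \<epsilon>\<close> by auto
  define h where "h = min (\<delta> / 2) ((b - x0) / 2)"
  have "h \<le> \<delta> / 2" "h \<le> (b - x0) / 2" unfolding h_def by (rule min.cobounded1, rule min.cobounded2)
  then have h: "0 < h" "h < \<delta>" "x0 + h < b" using \<open>0 < \<delta>\<close> \<open>x0 < b\<close> by (auto simp: h_def)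
  have "\<phi> (x0 + h) < y" using drop[OF h(1,2)] x0 by (simp add: S_def x0_def)
  moreover have "continuous_on {x0 + h..b} \<phi>"
    using cont_\<phi> \<open>a < x0\<close> h by (auto intro: continuous_on_subset)
  ultimately obtain x2 where "x0 + h \<le> x2" "x2 \<le> b" "\<phi> x2 = y"
    using IVT'[of \<phi> "x0 + h" y b] \<phi>_b y h by force
  then have "x2 \<in> S" using \<open>a < x0\<close> h by (auto simp: S_def)
  then have "x2 \<le> x0" unfolding x0_def using bdd by (rule cSup_upper)
  with \<open>x0 + h \<le> x2\<close> h show False by simp
qed

lemma deriv_zero_off_countable_imp_eq:
  fixes H :: "real \<Rightarrow> real"
  assumes "a \<le> b" and cont: "continuous_on {a..b} H" and "countable K"
    and deriv: "\<And>x. x \<in> {a<..<b} - K \<Longrightarrow> (H has_real_derivative 0) (at x)"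
  shows "H b = H a"
proof -
  have "H b \<le> H a" by (rule deriv_zero_off_countable_imp_le[OF assms])
  moreover have "(\<lambda>x. - H x) b \<le> (\<lambda>x. - H x) a"
  proof (rule deriv_zero_off_countable_imp_le[OF \<open>a \<le> b\<close> _ \<open>countable K\<close>])
    show "continuous_on {a..b} (\<lambda>x. - H x)" by (intro continuous_intros cont)
    fix x assume "x \<in> {a<..<b} - K"
    from deriv[OF this] show "((\<lambda>x. - H x) has_real_derivative 0) (at x)"
      using DERIV_minus by fastforce
  qed
  ultimately show ?thesis by simp
qed

section \<open>The Skorokhod reflection of an integral\<close>

text \<open>\<open>reflected = free_path - running_floor\<close> is the Skorokhod reflection at \<open>0\<close> of
  \<open>free_path t = R0 + \<integral>\<^sub>0\<^sup>t k\<close>: the nonincreasing term \<open>running_floor\<close> pushes only when the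
  reflected path is at \<open>0\<close>. It solves \<open>R' = k\<close>, except that \<open>R' = 0\<close> where \<open>R = 0\<close> and \<open>k < 0\<close>.\<close>

locale skorokhod_reflection =
  fixes k :: "real \<Rightarrow> real" and R0 L :: real
  assumes cont_k: "continuous_on UNIV k" and R0_nonneg: "0 \<le> R0" and L_nonneg: "0 \<le> L"
begin

definition free_path :: "real \<Rightarrow> real" where
  "free_path t = R0 + integral {0..t} k"

definition running_min :: "real \<Rightarrow> real" where
  "running_min t = Inf (free_path ` {0..t})"

definition running_floor :: "real \<Rightarrow> real" where
  "running_floor t = min 0 (running_min t)"

definition reflected :: "real \<Rightarrow> real" where
  "reflected t = free_path t - running_floor t"

definition reflected_rate :: "real \<Rightarrow> real" where
  "reflected_rate t = (if reflected t = 0 \<and> k t < 0 then 0 else k t)"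

definition k_bound :: real where
  "k_bound = Sup ((\<lambda>x. \<bar>k x\<bar>) ` {0..L})"

lemma integrable_k: "k integrable_on {a..b}"
  by (rule integrable_continuous_interval, rule continuous_on_subset[OF cont_k]) auto

lemma isCont_k: "isCont k x"
  by (rule continuous_on_interior[OF cont_k]) auto

lemma abs_k_le_bound: "x \<in> {0..L} \<Longrightarrow> \<bar>k x\<bar> \<le> k_bound"
proof -
  assume x: "x \<in> {0..L}"
  have "compact ((\<lambda>x. \<bar>k x\<bar>) ` {0..L})"
    by (intro compact_continuous_image continuous_intros continuous_on_subset[OF cont_k]) auto
  then have "bdd_above ((\<lambda>x. \<bar>k x\<bar>) ` {0..L})" by (intro bounded_imp_bdd_above compact_imp_bounded)
  then show ?thesis unfolding k_bound_def using x by (intro cSup_upper) auto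
qed

lemma k_bound_nonneg: "0 \<le> k_bound"
  using abs_k_le_bound[of 0] L_nonneg by force

lemma free_path_0: "free_path 0 = R0"
  by (simp add: free_path_def)

lemma free_path_diff: "0 \<le> a \<Longrightarrow> a \<le> b \<Longrightarrow> free_path b - free_path a = integral {a..b} k"
  using Henstock_Kurzweil_Integration.integral_combine[of 0 a b k] integrable_k
  by (simp add: free_path_def)

lemma continuous_on_free_path: "continuous_on {0..b} free_path"
  unfolding free_path_def by (intro continuous_intros indefinite_integral_continuous_1 integrable_k)

lemma free_path_deriv: "0 < x \<Longrightarrow> (free_path has_real_derivative k x) (at x)"
proof -
  assume x: "0 < x"
  have "((\<lambda>u. integral {0..u} k) has_real_derivative k x) (at x within {0..x + 1})"
    by (rule integral_has_real_derivative, rule continuous_on_subset[OF cont_k]) (use x in auto)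
  then have "((\<lambda>u. integral {0..u} k) has_real_derivative k x) (at x)"
    using at_within_Icc_at[of 0 x "x + 1"] x by simp
  then show ?thesis unfolding free_path_def[abs_def] by (auto intro!: derivative_eq_intros)
qed

lemma free_path_lipschitz:
  assumes "a \<in> {0..L}" "b \<in> {0..L}"
  shows "\<bar>free_path b - free_path a\<bar> \<le> k_bound * \<bar>b - a\<bar>"
proof -
  have *: "\<bar>free_path y - free_path x\<bar> \<le> k_bound * (y - x)" if "0 \<le> x" "x \<le> y" "y \<le> L" for x y
  proof -
    have "norm (integral {x..y} k) \<le> k_bound * Henstock_Kurzweil_Integration.content {x..y}"
      using has_integral_bound_real[of k_bound "{}" k "integral {x..y} k" x y]
        k_bound_nonneg integrable_k abs_k_le_bound that
      by auto
    then show ?thesis using free_path_diff[of x y] that by simp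
  qed
  show ?thesis
    using *[of a b] *[of b a] assms by (cases "a \<le> b") (auto simp: abs_minus_commute)
qed

lemma running_min_attained:
  assumes "0 \<le> t"
  obtains z where "z \<in> {0..t}" "running_min t = free_path z" "\<forall>w\<in>{0..t}. free_path z \<le> free_path w"
proof -
  obtain z where z: "z \<in> {0..t}" "\<forall>w\<in>{0..t}. free_path z \<le> free_path w"
    using continuous_attains_inf[OF compact_Icc _ continuous_on_free_path[of t]] assms by auto
  moreover have "running_min t = free_path z"
    unfolding running_min_def by (rule cInf_eq_minimum) (use z in auto)
  ultimately show thesis using that by blast
qed

lemma running_min_le: "0 \<le> w \<Longrightarrow> w \<le> t \<Longrightarrow> running_min t \<le> free_path w"
  by (rule running_min_attained[of t]) auto

lemma running_min_antimono: "0 \<le> x \<Longrightarrow> x \<le> y \<Longrightarrow> running_min y \<le> running_min x"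
proof -
  assume "0 \<le> x" "x \<le> y"
  then obtain z where "z \<in> {0..x}" "running_min x = free_path z"
    using running_min_attained by blast
  then show "running_min y \<le> running_min x" using running_min_le[of z y] \<open>x \<le> y\<close> by simp
qed

lemma running_floor_antimono: "0 \<le> x \<Longrightarrow> x \<le> y \<Longrightarrow> running_floor y \<le> running_floor x"
  using running_min_antimono[of x y] by (auto simp: running_floor_def)

lemma running_floor_nonpos: "running_floor t \<le> 0"
  by (simp add: running_floor_def)

lemma running_floor_le_free_path: "0 \<le> t \<Longrightarrow> running_floor t \<le> free_path t"
  using running_min_le[of t t] by (auto simp: running_floor_def)

lemma reflected_nonneg: "0 \<le> t \<Longrightarrow> 0 \<le> reflected t"
  using running_floor_le_free_path[of t] by (simp add: reflected_def)

lemma reflected_0: "reflected 0 = R0"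
proof -
  have "running_min 0 = free_path 0" by (rule running_min_attained[of 0]) auto
  then show ?thesis using R0_nonneg by (simp add: reflected_def running_floor_def free_path_0)
qed

lemma reflected_hits_zero:
  assumes "0 \<le> t0" "free_path t0 \<le> 0"
  obtains z where "z \<in> {0..t0}" "reflected z = 0"
proof -
  obtain z where z: "z \<in> {0..t0}" "running_min t0 = free_path z"
    using running_min_attained[OF assms(1)] by blast
  have "running_min t0 \<le> running_min z" "running_min z \<le> free_path z"
    using running_min_antimono[of z t0] running_min_le[of z z] z by auto
  moreover have "free_path z \<le> 0" using z running_min_le[of t0 t0] assms by simp
  ultimately have "reflected z = 0" using z by (simp add: reflected_def running_floor_def)
  with z show thesis using that by blast
qed

lemma running_floor_const_right:
  assumes "0 \<le> x" "x \<le> y" and above: "\<forall>w\<in>{x..y}. running_floor x \<le> free_path w"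
  shows "running_floor y = running_floor x"
proof -
  have "0 \<le> y" using assms by linarith
  then obtain z where z: "z \<in> {0..y}" "running_min y = free_path z"
    using running_min_attained by blast
  have "running_floor x \<le> running_floor y"
  proof (cases "z \<le> x")
    case True
    then have "running_min x \<le> running_min y" using running_min_le[of z x] z by simp
    then show ?thesis by (simp add: running_floor_def)
  next
    case False
    then have "running_floor x \<le> running_min y" using z above by auto
    then show ?thesis using running_floor_nonpos[of x] by (simp add: running_floor_def)
  qed
  moreover have "running_floor y \<le> running_floor x" using running_floor_antimono assms by simp
  ultimately show ?thesis by simp
qed

lemma running_floor_const_left:
  assumes "0 \<le> y" "y \<le> x" and above: "\<forall>w\<in>{y..x}. running_floor x < free_path w"
  shows "running_floor y = running_floor x"
proof -
  have "0 \<le> x" using assms by linarith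
  then obtain z where z: "z \<in> {0..x}" "running_min x = free_path z"
    using running_min_attained by blast
  have "running_min x \<le> running_min y" using running_min_antimono assms by simp
  moreover have "running_min y \<le> running_min x \<or> running_floor x = 0 \<and> 0 < running_min x"
  proof (cases "z \<le> y")
    case True
    then show ?thesis using running_min_le[of z y] z by simp
  next
    case False
    then have "running_floor x < running_min x" using z above by auto
    then show ?thesis by (auto simp: running_floor_def min_def split: if_splits)
  qed
  ultimately show ?thesis by (auto simp: running_floor_def)
qed

lemma abs_min0_diff_le: "\<bar>min 0 a - min 0 b\<bar> \<le> \<bar>(a::real) - b\<bar>"
  by (auto simp: min_def)

lemma running_floor_osc:
  assumes "0 \<le> x" "0 \<le> y"
  obtains w where "min x y \<le> w" "w \<le> max x y"
    "\<bar>running_floor y - running_floor x\<bar>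
      \<le> \<bar>free_path y - free_path x\<bar> + \<bar>free_path w - free_path x\<bar>"
proof -
  have "\<exists>w. min x y \<le> w \<and> w \<le> max x y \<and>
      \<bar>running_min y - running_min x\<bar> \<le> \<bar>free_path y - free_path x\<bar> + \<bar>free_path w - free_path x\<bar>"
  proof (cases "x \<le> y")
    case True
    have "0 \<le> y" using assms True by linarith
    then obtain z where z: "z \<in> {0..y}" "running_min y = free_path z"
      using running_min_attained by blast
    have "running_min y \<le> running_min x" "running_min x \<le> free_path x"
      using running_min_antimono running_min_le[of x x] assms True by auto
    show ?thesis
    proof (cases "z \<le> x")
      case True
      then have "running_min x \<le> running_min y" using running_min_le[of z x] z by simp
      then show ?thesis using \<open>running_min y \<le> running_min x\<close> \<open>x \<le> y\<close> by (intro exI[of _ x]) auto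
    next
      case False
      then show ?thesis using z \<open>x \<le> y\<close> \<open>running_min y \<le> running_min x\<close> \<open>running_min x \<le> free_path x\<close>
        by (intro exI[of _ z]) auto
    qed
  next
    case False
    have "0 \<le> x" using assms by linarith
    then obtain z where z: "z \<in> {0..x}" "running_min x = free_path z"
      using running_min_attained by blast
    have "running_min x \<le> running_min y" "running_min y \<le> free_path y"
      using running_min_antimono running_min_le[of y y] assms False by auto
    show ?thesis
    proof (cases "z \<le> y")
      case True
      then have "running_min y \<le> running_min x" using running_min_le[of z y] z by simp
      then show ?thesis using \<open>running_min x \<le> running_min y\<close> False by (intro exI[of _ x]) auto
    next
      case z_gt: False
      then show ?thesis using z False \<open>running_min x \<le> running_min y\<close> \<open>running_min y \<le> free_path y\<close>
        by (intro exI[of _ z]) auto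
    qed
  qed
  then obtain w where w: "min x y \<le> w" "w \<le> max x y"
    "\<bar>running_min y - running_min x\<bar> \<le> \<bar>free_path y - free_path x\<bar> + \<bar>free_path w - free_path x\<bar>"
    by blast
  have "\<bar>running_floor y - running_floor x\<bar> \<le> \<bar>running_min y - running_min x\<bar>"
    unfolding running_floor_def by (rule abs_min0_diff_le)
  with w show thesis using that[of w] by linarith
qed

lemma running_floor_lipschitz:
  assumes "x \<in> {0..L}" "y \<in> {0..L}"
  shows "\<bar>running_floor y - running_floor x\<bar> \<le> 2 * k_bound * \<bar>y - x\<bar>"
proof -
  have "0 \<le> x" "0 \<le> y" using assms by auto
  then obtain w where w: "min x y \<le> w" "w \<le> max x y"
    "\<bar>running_floor y - running_floor x\<bar>
      \<le> \<bar>free_path y - free_path x\<bar> + \<bar>free_path w - free_path x\<bar>"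
    by (rule running_floor_osc)
  have "w \<in> {0..L}" "\<bar>w - x\<bar> \<le> \<bar>y - x\<bar>"
    using assms w by (auto simp: min_def max_def split: if_splits)
  then have "\<bar>free_path w - free_path x\<bar> \<le> k_bound * \<bar>y - x\<bar>"
    using free_path_lipschitz[of x w] assms k_bound_nonneg
    by (meson mult_left_mono order_trans)
  then show ?thesis using w(3) free_path_lipschitz[of x y] assms by linarith
qed

lemma continuous_on_reflected: "continuous_on {0..L} reflected"
proof -
  have "(2 * k_bound)-lipschitz_on {0..L} running_floor"
    by (rule lipschitz_onI) (use running_floor_lipschitz k_bound_nonneg in \<open>auto simp: dist_real_def\<close>)
  then have "continuous_on {0..L} running_floor" by (rule lipschitz_on_continuous_on)
  then show ?thesis unfolding reflected_def[abs_def] by (intro continuous_intros continuous_on_free_path)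
qed

lemma isCont_reflected: "0 < x \<Longrightarrow> x < L \<Longrightarrow> isCont reflected x"
  by (rule continuous_on_interior[OF continuous_on_reflected]) auto

lemma reflected_deriv_where_pos:
  assumes x: "0 < x" "x < L" and pos: "0 < reflected x"
  shows "(reflected has_real_derivative k x) (at x) \<and> isCont reflected_rate x"
proof -
  have "isCont free_path x" using free_path_deriv[OF x(1)] by (rule DERIV_isCont)
  then have "\<forall>e>0. \<exists>d>0. \<forall>y. \<bar>y - x\<bar> < d \<longrightarrow> \<bar>free_path y - free_path x\<bar> < e"
    unfolding continuous_at_eps_delta dist_real_def .
  moreover have "0 < reflected x / 2" using pos by simp
  ultimately obtain \<eta> where "0 < \<eta>" and
    \<eta>: "\<And>y. \<bar>y - x\<bar> < \<eta> \<Longrightarrow> \<bar>free_path y - free_path x\<bar> < reflected x / 2"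
    by blast
  define \<rho> where "\<rho> = min \<eta> x"
  have "0 < \<rho>" using \<open>0 < \<eta>\<close> x by (simp add: \<rho>_def)
  have above: "running_floor x < free_path w" if "\<bar>w - x\<bar> < \<rho>" for w
  proof -
    have "\<bar>free_path w - free_path x\<bar> < reflected x / 2" using \<eta>[of w] that by (simp add: \<rho>_def)
    then have "- (free_path w - free_path x) < reflected x / 2"
      by (rule abs_less_iff[THEN iffD1, THEN conjunct2])
    moreover have "running_floor x = free_path x - reflected x" by (simp add: reflected_def)
    ultimately show ?thesis using pos by linarith
  qed
  have floor_const: "running_floor y = running_floor x" if y: "\<bar>y - x\<bar> < \<rho>" for y
  proof (cases "x \<le> y")
    case True
    show ?thesis
    proof (rule running_floor_const_right)
      show "\<forall>w\<in>{x..y}. running_floor x \<le> free_path w"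
      proof
        fix w assume "w \<in> {x..y}"
        then have "\<bar>w - x\<bar> < \<rho>" using y by auto
        then show "running_floor x \<le> free_path w" using above[of w] by simp
      qed
    qed (use True x in auto)
  next
    case False
    show ?thesis
    proof (rule running_floor_const_left)
      show "\<forall>w\<in>{y..x}. running_floor x < free_path w"
      proof
        fix w assume "w \<in> {y..x}"
        then have "\<bar>w - x\<bar> < \<rho>" using y False by auto
        then show "running_floor x < free_path w" by (rule above)
      qed
    qed (use False y in \<open>auto simp: \<rho>_def\<close>)
  qed
  have ev: "\<forall>\<^sub>F y in nhds x. reflected y = free_path y - running_floor x"
    unfolding eventually_nhds_metric
  proof (intro exI[of _ \<rho>] conjI allI impI \<open>0 < \<rho>\<close>)
    fix y assume "dist y x < \<rho>"
    then show "reflected y = free_path y - running_floor x"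
      using floor_const[of y] by (simp add: dist_real_def reflected_def)
  qed
  have "((\<lambda>y. free_path y - running_floor x) has_real_derivative k x - 0) (at x)"
    by (rule DERIV_diff[OF free_path_deriv[OF x(1)] DERIV_const])
  then have deriv: "(reflected has_real_derivative k x) (at x)"
    using DERIV_cong_ev[OF refl ev refl] by simp
  have "(reflected \<longlongrightarrow> reflected x) (nhds x)"
    using isCont_reflected[OF x] by (simp add: isCont_def tendsto_at_iff_tendsto_nhds)
  then have "\<forall>\<^sub>F y in nhds x. 0 < reflected y" using pos by (rule order_tendstoD(1))
  then have "\<forall>\<^sub>F y in nhds x. reflected_rate y = k y"
    by eventually_elim (auto simp: reflected_rate_def)
  then have "isCont reflected_rate x \<longleftrightarrow> isCont k x" by (rule isCont_cong)
  with deriv isCont_k show ?thesis by simp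
qed

lemma k_nonpos_where_reflected_zero:
  assumes "0 < x" and "reflected x = 0"
  shows "k x \<le> 0"
proof (rule ccontr)
  assume "\<not> k x \<le> 0"
  then obtain d where "0 < d" and incr: "\<And>h. 0 < h \<Longrightarrow> h < d \<Longrightarrow> free_path (x - h) < free_path x"
    using DERIV_pos_inc_left[OF free_path_deriv[OF \<open>0 < x\<close>]] by auto
  define h where "h = min (d / 2) (x / 2)"
  have h: "0 < h" "h < d" "h < x" using \<open>0 < d\<close> \<open>0 < x\<close> by (auto simp: h_def)
  have "free_path (x - h) < free_path x" using incr h by simp
  also have "\<dots> = running_floor x" using \<open>reflected x = 0\<close> by (simp add: reflected_def)
  also have "\<dots> \<le> running_floor (x - h)" using running_floor_antimono[of "x - h" x] h by simp
  also have "\<dots> \<le> free_path (x - h)" using running_floor_le_free_path h by simp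
  finally show False by simp
qed

lemma reflected_deriv_where_k_zero:
  assumes x: "0 < x" "x < L" and zero: "reflected x = 0" and k0: "k x = 0"
  shows "(reflected has_real_derivative 0) (at x) \<and> isCont reflected_rate x"
proof
  have free_path_flat: "((\<lambda>y. (free_path y - free_path x) / (y - x)) \<longlongrightarrow> 0) (at x)"
    using free_path_deriv[OF x(1)] k0 by (simp add: has_field_derivative_iff)
  show "(reflected has_real_derivative 0) (at x)"
    unfolding has_field_derivative_iff LIM_eq
  proof (intro allI impI)
    fix e :: real assume "0 < e"
    then obtain s1 where "0 < s1" and s1: "\<And>y. y \<noteq> x \<Longrightarrow> norm (y - x) < s1 \<Longrightarrow>
        norm ((free_path y - free_path x) / (y - x) - 0) < e / 4"
      using free_path_flat unfolding LIM_eq by (metis zero_less_divide_iff zero_less_numeral)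
    have small: "\<bar>free_path y - free_path x\<bar> \<le> e / 4 * \<bar>y - x\<bar>" if "\<bar>y - x\<bar> < s1" for y
      using s1[of y] that by (cases "y = x") (auto simp: abs_divide divide_less_eq)
    show "\<exists>s>0. \<forall>y. y \<noteq> x \<and> norm (y - x) < s \<longrightarrow> norm ((reflected y - reflected x) / (y - x) - 0) < e"
    proof (intro exI[of _ "min s1 x"] conjI allI impI)
      show "0 < min s1 x" using \<open>0 < s1\<close> x by simp
      fix y assume y: "y \<noteq> x \<and> norm (y - x) < min s1 x"
      then have "0 \<le> y" "\<bar>y - x\<bar> < s1" by auto
      then obtain w where w: "min x y \<le> w" "w \<le> max x y"
        "\<bar>running_floor y - running_floor x\<bar>
          \<le> \<bar>free_path y - free_path x\<bar> + \<bar>free_path w - free_path x\<bar>"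
        using running_floor_osc[of x y] less_imp_le[OF x(1)] by blast
      have "\<bar>w - x\<bar> \<le> \<bar>y - x\<bar>" using w by (auto simp: min_def max_def split: if_splits)
      then have "\<bar>free_path w - free_path x\<bar> \<le> e / 4 * \<bar>w - x\<bar>"
        using small[of w] \<open>\<bar>y - x\<bar> < s1\<close> by simp
      also have "\<dots> \<le> e / 4 * \<bar>y - x\<bar>"
        using \<open>\<bar>w - x\<bar> \<le> \<bar>y - x\<bar>\<close> \<open>0 < e\<close> by (intro mult_left_mono) auto
      finally have "\<bar>free_path w - free_path x\<bar> \<le> e / 4 * \<bar>y - x\<bar>" .
      moreover have "reflected y - reflected x
          = (free_path y - free_path x) - (running_floor y - running_floor x)"
        using zero by (simp add: reflected_def)
      ultimately have "\<bar>reflected y - reflected x\<bar> \<le> 3 * (e / 4) * \<bar>y - x\<bar>"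
        using w(3) small[of y] \<open>\<bar>y - x\<bar> < s1\<close> by linarith
      also have "\<dots> < e * \<bar>y - x\<bar>" using \<open>0 < e\<close> y by simp
      finally show "norm ((reflected y - reflected x) / (y - x) - 0) < e"
        using y by (simp add: abs_divide divide_less_eq)
    qed
  qed
  have "((\<lambda>y. \<bar>k y\<bar>) \<longlongrightarrow> \<bar>k x\<bar>) (at x)"
    using isCont_k[of x] unfolding isCont_def by (intro tendsto_intros)
  then have upper: "((\<lambda>y. \<bar>k y\<bar>) \<longlongrightarrow> 0) (at x)" using k0 by simp
  have lower: "((\<lambda>y. - \<bar>k y\<bar>) \<longlongrightarrow> 0) (at x)" using tendsto_minus[OF upper] by simp
  have "(reflected_rate \<longlongrightarrow> 0) (at x)"
    by (rule tendsto_sandwich[OF _ _ lower upper]) (auto simp: reflected_rate_def intro!: always_eventually)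
  then show "isCont reflected_rate x" using k0 by (simp add: isCont_def reflected_rate_def)
qed

lemma reflected_deriv_where_locally_zero:
  assumes zero: "\<exists>\<eta>>0. \<forall>y. \<bar>y - x\<bar> < \<eta> \<longrightarrow> reflected y = 0" and "k x < 0"
  shows "(reflected has_real_derivative 0) (at x) \<and> isCont reflected_rate x"
proof
  have ev: "\<forall>\<^sub>F y in nhds x. reflected y = 0"
    using zero unfolding eventually_nhds_metric by (auto simp: dist_real_def)
  then show "(reflected has_real_derivative 0) (at x)"
    using DERIV_cong_ev[OF refl ev refl] by simp
  have "\<forall>\<^sub>F y in nhds x. k y < 0"
    using isCont_k[of x] \<open>k x < 0\<close> by (simp add: isCont_def tendsto_at_iff_tendsto_nhds order_tendstoD)
  with ev have "\<forall>\<^sub>F y in nhds x. reflected_rate y = 0"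
    by eventually_elim (auto simp: reflected_rate_def)
  then have "isCont reflected_rate x \<longleftrightarrow> isCont (\<lambda>_. 0::real) x" by (rule isCont_cong)
  then show "isCont reflected_rate x" by simp
qed

lemma reflected_stays_zero_right:
  assumes "0 < x" and zero: "reflected x = 0" and "k x < 0"
  shows "\<exists>\<eta>>0. \<forall>y. x \<le> y \<and> y < x + \<eta> \<longrightarrow> reflected y = 0"
proof -
  have "\<forall>e>0. \<exists>d>0. \<forall>y. \<bar>y - x\<bar> < d \<longrightarrow> \<bar>k y - k x\<bar> < e"
    using isCont_k[of x] unfolding continuous_at_eps_delta dist_real_def .
  then obtain \<eta> where "0 < \<eta>" and \<eta>: "\<And>y. \<bar>y - x\<bar> < \<eta> \<Longrightarrow> \<bar>k y - k x\<bar> < - k x"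
    using \<open>k x < 0\<close> by (meson neg_0_less_iff_less)
  then have neg: "k y < 0" if "\<bar>y - x\<bar> < \<eta>" for y using \<eta>[OF that] by (simp add: abs_less_iff)
  have "reflected y = 0" if y: "x \<le> y" "y < x + \<eta>" for y
  proof -
    have decr: "free_path y \<le> free_path w" if "x \<le> w" "w \<le> y" for w
    proof -
      have "integral {w..y} k \<le> integral {w..y} (\<lambda>_. 0)"
        by (rule integral_le[OF integrable_k]) (use that y neg in \<open>auto intro!: less_imp_le\<close>)
      then show ?thesis using free_path_diff[of w y] that \<open>0 < x\<close> by simp
    qed
    have "0 \<le> y" using \<open>0 < x\<close> y by linarith
    then obtain z where z: "z \<in> {0..y}" "running_min y = free_path z"
      using running_min_attained by blast
    have floor_x: "free_path x = running_floor x" using zero by (simp add: reflected_def)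
    have "free_path y \<le> running_min y"
    proof (cases "z \<le> x")
      case True
      then have "running_floor x \<le> free_path z"
        using running_min_le[of z x] z by (simp add: running_floor_def)
      then show ?thesis using floor_x decr[of x] y z by simp
    next
      case False
      then show ?thesis using decr[of z] z by simp
    qed
    moreover have "free_path y \<le> 0" using decr[of x] y floor_x running_floor_nonpos[of x] by simp
    ultimately have "free_path y \<le> running_floor y" by (simp add: running_floor_def)
    then show ?thesis using running_floor_le_free_path[of y] \<open>0 < x\<close> y by (simp add: reflected_def)
  qed
  then show ?thesis using \<open>0 < \<eta>\<close> by auto
qed

text \<open>The points where the reflected path starts to stick to \<open>0\<close>; each is the left end of an
  interval on which it vanishes, so there are only countably many.\<close>

definition entry_points :: "real set" where
  "entry_points = {x \<in> {0<..<L}. reflected x = 0 \<and> k x < 0 \<and>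
    \<not> (\<exists>\<eta>>0. \<forall>y. \<bar>y - x\<bar> < \<eta> \<longrightarrow> reflected y = 0)}"

lemma countable_entry_points: "countable entry_points"
proof -
  define \<eta>f where "\<eta>f x = (SOME \<eta>. \<eta> > 0 \<and> (\<forall>y. x \<le> y \<and> y < x + \<eta> \<longrightarrow> reflected y = 0))" for x
  have \<eta>f: "\<eta>f x > 0 \<and> (\<forall>y. x \<le> y \<and> y < x + \<eta>f x \<longrightarrow> reflected y = 0)" if "x \<in> entry_points" for x
  proof -
    have "\<exists>\<eta>>0. \<forall>y. x \<le> y \<and> y < x + \<eta> \<longrightarrow> reflected y = 0"
      using reflected_stays_zero_right that by (auto simp: entry_points_def)
    then show ?thesis unfolding \<eta>f_def by (rule someI_ex)
  qed
  define q where "q x = (SOME q. q \<in> \<rat> \<and> x < q \<and> q < x + \<eta>f x)" for x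
  have q: "q x \<in> \<rat> \<and> x < q x \<and> q x < x + \<eta>f x" if "x \<in> entry_points" for x
  proof -
    have "\<exists>q. q \<in> \<rat> \<and> x < q \<and> q < x + \<eta>f x"
      using Rats_dense_in_real[of x "x + \<eta>f x"] \<eta>f[OF that] by auto
    then show ?thesis unfolding q_def by (rule someI_ex)
  qed
  have neq: "q x \<noteq> q x'"
    if xK: "x \<in> entry_points" and x'K: "x' \<in> entry_points" and lt: "x < x'" for x x'
  proof
    assume eq: "q x = q x'"
    have "x' < x + \<eta>f x" using q[OF x'K] q[OF xK] eq by auto
    define \<rho> where "\<rho> = min (x' - x) (x + \<eta>f x - x')"
    have "\<rho> > 0" using lt \<open>x' < x + \<eta>f x\<close> by (simp add: \<rho>_def)
    moreover have "\<forall>y. \<bar>y - x'\<bar> < \<rho> \<longrightarrow> reflected y = 0"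
      using \<eta>f[OF xK] by (auto simp: \<rho>_def abs_less_iff)
    ultimately show False using x'K by (auto simp: entry_points_def)
  qed
  have "inj_on q entry_points"
  proof (rule inj_onI)
    fix x x' assume "x \<in> entry_points" "x' \<in> entry_points" "q x = q x'"
    then show "x = x'" using neq by (metis linorder_neqE_linordered_idom)
  qed
  moreover have "countable (q ` entry_points)"
    using q by (intro countable_subset[OF _ countable_rat]) auto
  ultimately show ?thesis using countable_image_inj_on by blast
qed

lemma reflected_deriv_off_entry_points:
  assumes y: "0 < y" "y < L" "y \<notin> entry_points"
  shows "(reflected has_real_derivative reflected_rate y) (at y) \<and> isCont reflected_rate y"
proof (cases "0 < reflected y")
  case True
  then show ?thesis using reflected_deriv_where_pos[OF y(1,2)] by (simp add: reflected_rate_def)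
next
  case False
  then have zero: "reflected y = 0" using reflected_nonneg[of y] y by simp
  then consider "k y = 0" | "k y < 0" using k_nonpos_where_reflected_zero[OF y(1)] by fastforce
  then show ?thesis
  proof cases
    case 1
    then show ?thesis using reflected_deriv_where_k_zero[OF y(1,2) zero] by (simp add: reflected_rate_def)
  next
    case 2
    then have "\<exists>\<eta>>0. \<forall>x. \<bar>x - y\<bar> < \<eta> \<longrightarrow> reflected x = 0"
      using y zero by (auto simp: entry_points_def)
    then show ?thesis
      using reflected_deriv_where_locally_zero 2 zero by (simp add: reflected_rate_def)
  qed
qed

lemma abs_reflected_rate_le: "y \<in> {0..L} \<Longrightarrow> \<bar>reflected_rate y\<bar> \<le> k_bound"
  using abs_k_le_bound[of y] k_bound_nonneg by (auto simp: reflected_rate_def)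

text \<open>Continuous off a countable set and bounded, hence measurable and integrable.\<close>

lemma reflected_rate_integrable:
  assumes "0 < t" "t \<le> L"
  shows "reflected_rate integrable_on {0..t}"
proof -
  define F where "F y = (if y \<in> {0<..<t} then reflected_rate y else 0)" for y
  have "isCont F y" if y: "y \<notin> entry_points \<union> {0, t}" for y
  proof (cases "y \<in> {0<..<t}")
    case True
    have "\<forall>\<^sub>F x in nhds y. F x = reflected_rate x"
      using eventually_nhds_in_open[OF open_greaterThanLessThan True]
      by eventually_elim (simp add: F_def)
    moreover have "isCont reflected_rate y"
      using reflected_deriv_off_entry_points[of y] True y assms by auto
    ultimately show ?thesis using isCont_cong by blast
  next
    case False
    then have "y \<in> {..<0} \<union> {t<..}" using y by auto
    then have "\<forall>\<^sub>F x in nhds y. F x = 0"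
      by (rule eventually_nhds_in_open[THEN eventually_mono, rotated]) (auto simp: F_def)
    then have "isCont F y \<longleftrightarrow> isCont (\<lambda>_. 0::real) y" by (rule isCont_cong)
    then show ?thesis by simp
  qed
  then have "continuous_on (- (entry_points \<union> {0, t})) F"
    by (intro continuous_at_imp_continuous_on) auto
  moreover have "countable (entry_points \<union> {0, t})" using countable_entry_points by simp
  ultimately have "F \<in> borel_measurable borel"
    using borel_measurable_continuous_countable_exceptions by blast
  then have "F \<in> borel_measurable (lebesgue_on {0..t})"
    by (simp add: measurable_completion measurable_restrict_space1)
  then have "F integrable_on {0..t}"
    by (rule measurable_bounded_by_integrable_imp_integrable[where g = "\<lambda>_. k_bound"])
      (use abs_reflected_rate_le assms k_bound_nonneg in \<open>auto simp: F_def\<close>)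
  then show ?thesis
    using integrable_spike_finite[of "{0, t}" "{0..t}" reflected_rate F] by (auto simp: F_def)
qed

lemma reflected_rate_has_integral:
  assumes t: "0 \<le> t" "t \<le> L"
  shows "(reflected_rate has_integral (reflected t - reflected 0)) {0..t}"
proof (cases "t = 0")
  case True
  then show ?thesis using has_integral_refl(2)[of reflected_rate 0] by simp
next
  case False
  then have "0 < t" using t by simp
  then have int: "reflected_rate integrable_on {0..t}" using reflected_rate_integrable t(2) by blast
  define H where "H y = reflected y - integral {0..y} reflected_rate" for y
  have "continuous_on {0..t} H" unfolding H_def
    using continuous_on_subset[OF continuous_on_reflected, of "{0..t}"] t
    by (intro continuous_intros indefinite_integral_continuous_1 int) auto
  moreover have "(H has_real_derivative 0) (at y)" if y: "y \<in> {0<..<t} - entry_points" for y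
  proof -
    have refl: "(reflected has_real_derivative reflected_rate y) (at y)" "isCont reflected_rate y"
      using reflected_deriv_off_entry_points[of y] y t by auto
    have "((\<lambda>u. integral {0..u} reflected_rate) has_vector_derivative reflected_rate y)
        (at y within {0..t} - {})"
      by (rule integral_has_vector_derivative_continuous_at[OF int])
        (use y refl in \<open>auto intro: continuous_at_imp_continuous_within\<close>)
    then have "((\<lambda>u. integral {0..u} reflected_rate) has_real_derivative reflected_rate y) (at y)"
      using at_within_Icc_at[of 0 y t] y by (simp add: has_real_derivative_iff_has_vector_derivative)
    then have "(H has_real_derivative reflected_rate y - reflected_rate y) (at y)"
      unfolding H_def[abs_def] using refl by (intro derivative_eq_intros) auto
    then show ?thesis by simp
  qed
  ultimately have "H t = H 0"
    using deriv_zero_off_countable_imp_eq[OF t(1) _ countable_entry_points] by blast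
  then have "integral {0..t} reflected_rate = reflected t - reflected 0" by (simp add: H_def)
  then show ?thesis using integrable_integral[OF int] by simp
qed

end

section \<open>Uncertainty dynamics\<close>

definition free_rate :: "real \<Rightarrow> real \<Rightarrow> pt \<Rightarrow> real \<Rightarrow> pt \<Rightarrow> real" where
  "free_rate A B x r y = A - B * sens_p x r y"

lemma f_R_eq_free_rate:
  "f_R A B x r R y = (if R = 0 \<and> free_rate A B x r y < 0 then 0 else free_rate A B x r y)"
  by (simp add: f_R_def free_rate_def)

lemma continuous_on_free_rate:
  "continuous_on S c \<Longrightarrow> continuous_on S (\<lambda>\<tau>. free_rate A B x r (c \<tau>))"
  unfolding free_rate_def sens_p_def divide_inverse by (intro continuous_intros) auto

lemma sens_p_bounds: "0 \<le> sens_p x r y" "sens_p x r y \<le> 1"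
  by (auto simp: sens_p_def)

lemma sens_p_eq_min: "0 < r \<Longrightarrow> sens_p x r y = 1 - (min (norm (y - x)) r)\<^sup>2 / r\<^sup>2"
  by (auto simp: sens_p_def min_def max_def field_simps power_mono)

lemma sens_p_lipschitz:
  assumes "0 < r"
  shows "\<bar>sens_p x r y - sens_p x r z\<bar> \<le> 2 / r * norm (y - z)"
proof -
  define a b where "a = min (norm (y - x)) r" and "b = min (norm (z - x)) r"
  have ab: "0 \<le> a" "a \<le> r" "0 \<le> b" "b \<le> r" using assms by (auto simp: a_def b_def)
  have "\<bar>a - b\<bar> \<le> \<bar>norm (y - x) - norm (z - x)\<bar>" by (auto simp: a_def b_def min_def)
  also have "\<dots> \<le> norm ((y - x) - (z - x))" by (rule norm_triangle_ineq3)
  finally have "\<bar>a - b\<bar> \<le> norm (y - z)" by simp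
  have "sens_p x r y - sens_p x r z = (b - a) * (a + b) / r\<^sup>2"
    unfolding sens_p_eq_min[OF assms] a_def b_def using assms by (simp add: field_simps power2_eq_square)
  then have "\<bar>sens_p x r y - sens_p x r z\<bar> = \<bar>a - b\<bar> * (a + b) / r\<^sup>2"
    using ab by (simp add: abs_mult abs_minus_commute)
  also have "\<dots> \<le> norm (y - z) * (2 * r) / r\<^sup>2"
    using ab \<open>\<bar>a - b\<bar> \<le> norm (y - z)\<close> by (intro divide_right_mono mult_mono) auto
  also have "\<dots> = 2 / r * norm (y - z)" using assms by (simp add: power2_eq_square)
  finally show ?thesis .
qed

lemma free_rate_lower_bound: "- (\<bar>A\<bar> + \<bar>B\<bar>) \<le> free_rate A B x r y"
proof -
  have "\<bar>B * sens_p x r y\<bar> \<le> \<bar>B\<bar>"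
    using sens_p_bounds[of x r y] by (simp add: abs_mult mult_left_le)
  then show ?thesis by (simp add: free_rate_def)
qed

lemma free_rate_lipschitz:
  assumes "0 < r"
  shows "\<bar>free_rate A B x r y - free_rate A B x r z\<bar> \<le> 2 * \<bar>B\<bar> / r * norm (y - z)"
proof -
  have "\<bar>free_rate A B x r y - free_rate A B x r z\<bar> = \<bar>B\<bar> * \<bar>sens_p x r y - sens_p x r z\<bar>"
    by (simp add: free_rate_def abs_mult[symmetric] algebra_simps)
  also have "\<dots> \<le> \<bar>B\<bar> * (2 / r * norm (y - z))"
    by (intro mult_left_mono sens_p_lipschitz assms) simp
  finally show ?thesis by (simp add: mult.assoc mult.left_commute)
qed

lemma free_rate_eq_zero:
  assumes "A < B" and "free_rate A B x r y = 0"
  shows "0 < B" and "0 \<le> A" and "sens_p x r y = A / B"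
proof -
  have "B * sens_p x r y = A" using assms(2) by (simp add: free_rate_def)
  then show "0 < B"
  proof (rule contrapos_pp)
    assume "\<not> 0 < B"
    then have "B * 1 \<le> B * sens_p x r y" using sens_p_bounds(2) by (intro mult_left_mono_neg) auto
    then show "B * sens_p x r y \<noteq> A" using assms(1) by simp
  qed
  with \<open>B * sens_p x r y = A\<close> show "0 \<le> A" "sens_p x r y = A / B"
    using sens_p_bounds[of x r y] by (auto simp: field_simps)
qed

lemma sens_p_eq_imp_norm_eq:
  assumes "0 < r" "0 < sens_p x r y" "sens_p x r y = sens_p x r z"
  shows "norm (y - x) = norm (z - x)"
proof -
  have "sens_p x r y = 1 - (norm (y - x))\<^sup>2 / r\<^sup>2" "sens_p x r z = 1 - (norm (z - x))\<^sup>2 / r\<^sup>2"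
    using assms by (auto simp: sens_p_def max_def split: if_splits)
  then have "(norm (y - x))\<^sup>2 = (norm (z - x))\<^sup>2" using assms by (simp add: field_simps)
  then show ?thesis by (simp add: power2_eq_iff_nonneg)
qed

lemma r_le_norm_if_sens_p_eq_0: "0 < r \<Longrightarrow> sens_p x r y = 0 \<Longrightarrow> r \<le> norm (y - x)"
  by (auto simp: sens_p_def max_def field_simps abs_le_square_iff[symmetric] split: if_splits)

lemma exists_feasible_uncertainty:
  fixes c :: "real \<Rightarrow> pt"
  assumes cont_c: "continuous_on {0..L} c" and "0 \<le> L" and "0 \<le> R0" and t0: "t0 \<in> {0..L}"
    and drained: "R0 + integral {0..t0} (\<lambda>\<tau>. free_rate A B x r (c \<tau>)) \<le> 0"
  obtains R where "\<forall>t\<in>{0..L}. ((\<lambda>\<tau>. f_R A B x r (R \<tau>) (c \<tau>)) has_integral (R t - R 0)) {0..t}"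
    and "\<forall>\<tau>\<in>{0..L}. 0 \<le> R \<tau>" and "\<exists>\<tau>\<in>{0..L}. R \<tau> = 0" and "R 0 = R0"
proof -
  define k where "k \<tau> = free_rate A B x r (c (max 0 (min L \<tau>)))" for \<tau>
  have "continuous_on UNIV k" unfolding k_def
    by (intro continuous_on_free_rate continuous_on_compose2[OF cont_c] continuous_intros)
      (auto simp: \<open>0 \<le> L\<close>)
  then interpret S: skorokhod_reflection k R0 L by unfold_locales (use assms in auto)
  have k_eq: "k \<tau> = free_rate A B x r (c \<tau>)" if "\<tau> \<in> {0..L}" for \<tau>
    using that by (simp add: k_def)
  show thesis
  proof (rule that[of S.reflected])
    show "\<forall>t\<in>{0..L}. ((\<lambda>\<tau>. f_R A B x r (S.reflected \<tau>) (c \<tau>)) has_integral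
        (S.reflected t - S.reflected 0)) {0..t}"
    proof
      fix t assume t: "t \<in> {0..L}"
      have "S.reflected_rate \<tau> = f_R A B x r (S.reflected \<tau>) (c \<tau>)" if "\<tau> \<in> {0..t}" for \<tau>
        using that t k_eq[of \<tau>] by (simp add: S.reflected_rate_def f_R_eq_free_rate)
      then show "((\<lambda>\<tau>. f_R A B x r (S.reflected \<tau>) (c \<tau>))
          has_integral S.reflected t - S.reflected 0) {0..t}"
        using S.reflected_rate_has_integral[of t] t
          has_integral_cong[of "{0..t}" S.reflected_rate "\<lambda>\<tau>. f_R A B x r (S.reflected \<tau>) (c \<tau>)"]
        by simp
    qed
    show "\<forall>\<tau>\<in>{0..L}. 0 \<le> S.reflected \<tau>" using S.reflected_nonneg by simp
    have "S.free_path t0 = R0 + integral {0..t0} (\<lambda>\<tau>. free_rate A B x r (c \<tau>))"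
      unfolding S.free_path_def using t0 k_eq by (intro arg_cong[where f="\<lambda>z. R0 + z"] integral_cong) auto
    with drained have "S.free_path t0 \<le> 0" by simp
    moreover have "0 \<le> t0" using t0 by simp
    ultimately obtain z where "z \<in> {0..t0}" "S.reflected z = 0"
      using S.reflected_hits_zero by blast
    then show "\<exists>\<tau>\<in>{0..L}. S.reflected \<tau> = 0" using t0 by auto
    show "S.reflected 0 = R0" by (rule S.reflected_0)
  qed
qed

section \<open>Paths with speed at most one\<close>

lemma norm_diff_le_of_speed_le_1:
  fixes s :: "real \<Rightarrow> 'a::real_normed_vector"
  assumes der: "\<forall>t\<in>{0..T}. (s has_vector_derivative u t) (at t within {0..T})"
    and speed: "\<forall>t\<in>{0..T}. norm (u t) \<le> 1"
    and "0 \<le> a" "a \<le> b" "b \<le> T"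
  shows "norm (s b - s a) \<le> b - a"
proof -
  have "norm (s b - s a) \<le> 1 * norm (b - a)"
  proof (rule differentiable_bound[of "{a..b}"])
    fix t assume t: "t \<in> {a..b}"
    then have "(s has_vector_derivative u t) (at t within {0..T})" using der assms(3-5) by auto
    then show "(s has_derivative (\<lambda>h. h *\<^sub>R u t)) (at t within {a..b})"
      unfolding has_vector_derivative_def by (rule has_derivative_subset) (use assms(3,5) in auto)
    show "onorm (\<lambda>h. h *\<^sub>R u t) \<le> 1"
      using speed t assms(3-5) by (simp add: onorm_scaleR_left onorm_id)
  qed (use assms in auto)
  then show ?thesis using assms by simp
qed

lemma segment_of_norm_diff_eq:
  fixes s :: "real \<Rightarrow> 'a::real_inner"
  assumes lip: "\<And>c d. a \<le> c \<Longrightarrow> c \<le> d \<Longrightarrow> d \<le> b \<Longrightarrow> norm (s d - s c) \<le> d - c"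
    and "a < b" and eq: "norm (s b - s a) = b - a" and t: "t \<in> {a..b}"
  shows "s t = s a + ((t - a) / (b - a)) *\<^sub>R (s b - s a)"
proof -
  define X Y where "X = s t - s a" and "Y = s b - s t"
  have "norm X \<le> t - a" "norm Y \<le> b - t" using lip t by (auto simp: X_def Y_def)
  moreover have "norm (X + Y) = b - a" using eq by (simp add: X_def Y_def)
  moreover note norm_triangle_ineq[of X Y]
  ultimately have "norm X = t - a" "norm Y = b - t" "norm (X + Y) = norm X + norm Y"
    by linarith+
  then have "(t - a) *\<^sub>R Y = (b - t) *\<^sub>R X" using norm_triangle_eq[of X Y] by simp
  then have XY: "(b - a) *\<^sub>R X = (t - a) *\<^sub>R (X + Y)" by (simp add: algebra_simps)
  have "X = inverse (b - a) *\<^sub>R ((b - a) *\<^sub>R X)" using \<open>a < b\<close> by simp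
  also have "\<dots> = ((t - a) / (b - a)) *\<^sub>R (X + Y)"
    unfolding XY by (simp add: divide_inverse mult.commute)
  finally show ?thesis by (simp add: X_def Y_def algebra_simps)
qed

lemma has_real_derivative_max0_power2:
  "((\<lambda>z::real. (max 0 z)\<^sup>2) has_real_derivative 2 * max 0 z) (at z)"
proof -
  consider "z > 0" | "z < 0" | "z = 0" by linarith
  then show ?thesis
  proof cases
    case 1
    have ev: "\<forall>\<^sub>F w in nhds z. (max 0 w)\<^sup>2 = w\<^sup>2"
      using eventually_nhds_in_open[OF open_greaterThan, of z 0] 1 by (auto elim!: eventually_mono)
    have "((\<lambda>w. w\<^sup>2) has_real_derivative 2 * z) (at z)"
      using DERIV_pow[of 2 z] by simp
    then show ?thesis using DERIV_cong_ev[OF refl ev, of "2 * max 0 z" "2 * z"] 1 by simp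
  next
    case 2
    have ev: "\<forall>\<^sub>F w in nhds z. (max 0 w)\<^sup>2 = 0"
      using eventually_nhds_in_open[OF open_lessThan, of z 0] 2 by (auto elim!: eventually_mono)
    then show ?thesis using DERIV_cong_ev[OF refl ev, of "2 * max 0 z" 0] 2 by simp
  next
    case 3
    have "\<forall>\<^sub>F y in at (0::real). ((max 0 y)\<^sup>2 - (max 0 0)\<^sup>2) / (y - 0) = max 0 y"
      unfolding eventually_at_filter
      by (rule always_eventually) (auto simp: max_def power2_eq_square)
    moreover have "((\<lambda>y::real. max 0 y) \<longlongrightarrow> 2 * max 0 0) (at 0)"
      by (intro tendsto_eq_intros) auto
    ultimately show ?thesis using 3 tendsto_cong by (force simp: has_field_derivative_iff)
  qed
qed

text \<open>Feasible paths have a velocity at every time, so a detour cannot start with a kink: this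
  path leaves \<open>P\<close> with the prescribed velocity \<open>v\<close> and turns, within time \<open>\<delta>\<close>, into the
  straight run to \<open>q\<close>.\<close>

lemma C1_path_with_initial_velocity:
  fixes P q v :: "'a::real_normed_vector"
  assumes "norm v \<le> 1" and "0 < \<delta>"
  obtains L c c' where "0 < L" "L \<le> norm (q - P) + 2 * \<delta>" "c 0 = P" "c L = q" "c' 0 = v"
    "\<And>\<sigma>. (c has_vector_derivative c' \<sigma>) (at \<sigma>)" "\<And>\<sigma>. 0 \<le> \<sigma> \<Longrightarrow> norm (c' \<sigma>) \<le> 1"
proof -
  define Q where "Q = P + (\<delta>/2) *\<^sub>R v"
  define L where "L = \<delta> + norm (q - Q)"
  define e where "e = (1 / (L - \<delta>/2)) *\<^sub>R (q - Q)"
  have L_gt: "\<delta>/2 \<le> L - \<delta>/2" "0 < L - \<delta>/2"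
    using \<open>0 < \<delta>\<close> by (simp_all add: L_def add_pos_nonneg)
  have "norm e = norm (q - Q) / (L - \<delta>/2)" using L_gt by (simp add: e_def)
  also have "\<dots> \<le> 1" using L_gt \<open>0 < \<delta>\<close> by (simp add: L_def)
  finally have norm_e: "norm e \<le> 1" .
  have "norm (q - Q) \<le> norm (q - P) + norm ((\<delta>/2) *\<^sub>R v)"
    using norm_triangle_ineq4[of "q - P" "(\<delta>/2) *\<^sub>R v"] by (simp add: Q_def algebra_simps)
  also have "norm ((\<delta>/2) *\<^sub>R v) \<le> \<delta>/2" using assms by (simp add: mult_left_le)
  finally have L_le: "L \<le> norm (q - P) + 2 * \<delta>" using \<open>0 < \<delta>\<close> by (simp add: L_def)
  define \<phi> where "\<phi> \<sigma> = \<delta>/2 - (max 0 (\<delta> - \<sigma>))\<^sup>2 / (2*\<delta>)" for \<sigma>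
  define \<phi>' where "\<phi>' \<sigma> = max 0 (\<delta> - \<sigma>) / \<delta>" for \<sigma>
  have \<phi>_deriv: "(\<phi> has_real_derivative \<phi>' \<sigma>) (at \<sigma>)" for \<sigma>
  proof -
    have "((\<lambda>\<sigma>. (max 0 (\<delta> - \<sigma>))\<^sup>2) has_real_derivative 2 * max 0 (\<delta> - \<sigma>) * (0 - 1)) (at \<sigma>)"
      by (rule DERIV_chain2[OF has_real_derivative_max0_power2]) (intro derivative_eq_intros, auto)
    then have "(\<phi> has_real_derivative 0 - 2 * max 0 (\<delta> - \<sigma>) * (0 - 1) / (2*\<delta>)) (at \<sigma>)"
      unfolding \<phi>_def[abs_def] by (intro DERIV_diff DERIV_const DERIV_cdivide)
    then show ?thesis using \<open>0 < \<delta>\<close> by (simp add: \<phi>'_def)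
  qed
  define c where "c \<sigma> = P + \<phi> \<sigma> *\<^sub>R v + (\<sigma> - \<phi> \<sigma>) *\<^sub>R e" for \<sigma>
  define c' where "c' \<sigma> = \<phi>' \<sigma> *\<^sub>R v + (1 - \<phi>' \<sigma>) *\<^sub>R e" for \<sigma>
  show thesis
  proof (rule that[of L c c'])
    show "0 < L" "L \<le> norm (q - P) + 2 * \<delta>" using L_gt \<open>0 < \<delta>\<close> L_le by auto
    show "c 0 = P" "c' 0 = v"
      using \<open>0 < \<delta>\<close> by (simp_all add: c_def c'_def \<phi>_def \<phi>'_def power2_eq_square)
    have "\<phi> L = \<delta>/2" using L_gt by (simp add: \<phi>_def)
    then have "c L = Q + (L - \<delta>/2) *\<^sub>R e" by (simp only: c_def Q_def add.assoc)
    then show "c L = q" using L_gt by (simp add: e_def)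
    fix \<sigma>
    have "((\<lambda>\<sigma>. P + \<phi> \<sigma> *\<^sub>R v + (\<sigma> - \<phi> \<sigma>) *\<^sub>R e) has_vector_derivative
        0 + (\<phi> \<sigma> *\<^sub>R 0 + \<phi>' \<sigma> *\<^sub>R v) + ((\<sigma> - \<phi> \<sigma>) *\<^sub>R 0 + (1 - \<phi>' \<sigma>) *\<^sub>R e)) (at \<sigma>)"
      by (intro has_vector_derivative_add has_vector_derivative_const has_vector_derivative_scaleR
          \<phi>_deriv DERIV_diff[OF DERIV_ident \<phi>_deriv])
    then show "(c has_vector_derivative c' \<sigma>) (at \<sigma>)" by (simp add: c_def[abs_def] c'_def)
    assume "0 \<le> \<sigma>"
    then have "0 \<le> \<phi>' \<sigma>" "\<phi>' \<sigma> \<le> 1" using \<open>0 < \<delta>\<close> by (auto simp: \<phi>'_def divide_le_eq)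
    then have "norm (c' \<sigma>) \<le> \<phi>' \<sigma> * norm v + (1 - \<phi>' \<sigma>) * norm e"
      using norm_triangle_ineq[of "\<phi>' \<sigma> *\<^sub>R v" "(1 - \<phi>' \<sigma>) *\<^sub>R e"] by (simp add: c'_def)
    also have "\<dots> \<le> \<phi>' \<sigma> * 1 + (1 - \<phi>' \<sigma>) * 1"
      using \<open>0 \<le> \<phi>' \<sigma>\<close> \<open>\<phi>' \<sigma> \<le> 1\<close> assms(1) norm_e by (intro add_mono mult_left_mono) auto
    finally show "norm (c' \<sigma>) \<le> 1" by simp
  qed
qed

lemma integral_rescale_real:
  fixes f :: "real \<Rightarrow> real"
  assumes "0 < \<kappa>" and "0 \<le> t"
  shows "integral {0..\<kappa> * t} (\<lambda>\<sigma>. f (\<sigma> / \<kappa>)) = \<kappa> * integral {0..t} f"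
proof -
  have "(\<lambda>x. x / (1 / \<kappa>)) ` {0..t} = {0..\<kappa> * t}"
    using assms image_mult_atLeastAtMost_if[of \<kappa> 0 t] by (simp add: mult.commute)
  then show ?thesis
    using integral_stretch_real[of "1 / \<kappa>" 0 t f] assms by (simp add: divide_inverse mult.commute)
qed

text \<open>Mixing the fraction \<open>\<theta>\<close> of the straight segment into a path of speed at most 1 gives a
  path of speed at most \<open>\<kappa>\<close>, which can therefore be run in time \<open>\<kappa> T\<close>.\<close>

lemma convex_shortcut_path:
  fixes s u :: "real \<Rightarrow> 'a::real_normed_vector"
  assumes "0 < T" and der: "\<forall>t\<in>{0..T}. (s has_vector_derivative u t) (at t within {0..T})"
    and speed: "\<forall>t\<in>{0..T}. norm (u t) \<le> 1" and \<theta>: "0 \<le> \<theta>" "\<theta> \<le> 1/2"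
    and \<kappa>_def: "\<kappa> = 1 - \<theta> * (1 - norm (s T - s 0) / T)"
  defines "w \<equiv> \<lambda>t. (1 - \<theta>) *\<^sub>R s t + \<theta> *\<^sub>R (s 0 + (t / T) *\<^sub>R (s T - s 0))"
    and "u' \<equiv> \<lambda>\<sigma>. (1 / \<kappa>) *\<^sub>R ((1 - \<theta>) *\<^sub>R u (\<sigma> / \<kappa>) + (\<theta> / T) *\<^sub>R (s T - s 0))"
  shows "0 < \<kappa>"
    and "\<forall>\<sigma>\<in>{0..\<kappa> * T}. ((\<lambda>\<sigma>. w (\<sigma> / \<kappa>)) has_vector_derivative u' \<sigma>) (at \<sigma> within {0..\<kappa> * T})"
    and "\<forall>\<sigma>\<in>{0..\<kappa> * T}. norm (u' \<sigma>) \<le> 1"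
proof -
  have "\<theta> * (1 - norm (s T - s 0) / T) \<le> \<theta> * 1"
    using \<theta> \<open>0 < T\<close> by (intro mult_left_mono) auto
  then show \<kappa>_pos: "0 < \<kappa>" using \<theta> by (simp add: \<kappa>_def)
  have t_in: "\<sigma> / \<kappa> \<in> {0..T}" if "\<sigma> \<in> {0..\<kappa> * T}" for \<sigma>
    using that \<kappa>_pos by (auto simp: divide_le_eq mult.commute)
  show "\<forall>\<sigma>\<in>{0..\<kappa> * T}. ((\<lambda>\<sigma>. w (\<sigma> / \<kappa>)) has_vector_derivative u' \<sigma>) (at \<sigma> within {0..\<kappa> * T})"
  proof
    fix \<sigma> assume \<sigma>: "\<sigma> \<in> {0..\<kappa> * T}"
    let ?t = "\<sigma> / \<kappa>"
    have "((\<lambda>t. t / T) has_real_derivative 1 / T) (at ?t within {0..T})"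
      using \<open>0 < T\<close> by (auto intro!: derivative_eq_intros)
    then have "(w has_vector_derivative (1 - \<theta>) *\<^sub>R u ?t + (\<theta> / T) *\<^sub>R (s T - s 0))
        (at ?t within {0..T})"
      unfolding w_def using der t_in[OF \<sigma>] \<open>0 < T\<close>
      by (auto intro!: derivative_eq_intros simp: has_real_derivative_iff_has_vector_derivative)
    then have w_deriv: "(w has_vector_derivative (1 - \<theta>) *\<^sub>R u ?t + (\<theta> / T) *\<^sub>R (s T - s 0))
        (at ?t within (\<lambda>\<sigma>. \<sigma> / \<kappa>) ` {0..\<kappa> * T})"
      by (rule has_vector_derivative_within_subset) (use t_in in auto)
    have "((\<lambda>\<sigma>. \<sigma> / \<kappa>) has_vector_derivative 1 / \<kappa>) (at \<sigma> within {0..\<kappa> * T})"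
      using \<kappa>_pos by (auto intro!: derivative_eq_intros
          simp: has_real_derivative_iff_has_vector_derivative[symmetric])
    from this w_deriv have "((w \<circ> (\<lambda>\<sigma>. \<sigma> / \<kappa>)) has_vector_derivative
        (1 / \<kappa>) *\<^sub>R ((1 - \<theta>) *\<^sub>R u ?t + (\<theta> / T) *\<^sub>R (s T - s 0))) (at \<sigma> within {0..\<kappa> * T})"
      by (rule vector_diff_chain_within)
    then show "((\<lambda>\<sigma>. w (\<sigma> / \<kappa>)) has_vector_derivative u' \<sigma>) (at \<sigma> within {0..\<kappa> * T})"
      by (simp add: o_def u'_def)
  qed
  show "\<forall>\<sigma>\<in>{0..\<kappa> * T}. norm (u' \<sigma>) \<le> 1"
  proof
    fix \<sigma> assume "\<sigma> \<in> {0..\<kappa> * T}"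
    then have "(1 - \<theta>) * norm (u (\<sigma> / \<kappa>)) \<le> (1 - \<theta>) * 1"
      using speed t_in \<theta> by (intro mult_left_mono) auto
    moreover have "norm ((1 - \<theta>) *\<^sub>R u (\<sigma> / \<kappa>) + (\<theta> / T) *\<^sub>R (s T - s 0))
        \<le> (1 - \<theta>) * norm (u (\<sigma> / \<kappa>)) + \<theta> * (norm (s T - s 0) / T)"
      using norm_triangle_ineq[of "(1 - \<theta>) *\<^sub>R u (\<sigma> / \<kappa>)" "(\<theta> / T) *\<^sub>R (s T - s 0)"] \<theta> \<open>0 < T\<close>
      by simp
    ultimately have "norm ((1 - \<theta>) *\<^sub>R u (\<sigma> / \<kappa>) + (\<theta> / T) *\<^sub>R (s T - s 0))
        \<le> (1 - \<theta>) * 1 + \<theta> * (norm (s T - s 0) / T)"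
      by linarith
    also have "\<dots> = \<kappa>" by (simp add: \<kappa>_def algebra_simps)
    finally show "norm (u' \<sigma>) \<le> 1" using \<kappa>_pos by (simp add: u'_def divide_le_eq)
  qed
qed

lemma norm_midpoint_less:
  fixes y d :: "'a::real_inner"
  assumes "norm y \<le> \<rho>" and "norm (y + 2 *\<^sub>R d) \<le> \<rho>" and "d \<noteq> 0"
  shows "norm (y + d) < \<rho>"
proof -
  have parallelogram: "(norm (y + 2 *\<^sub>R d))\<^sup>2 + (norm y)\<^sup>2 = 2 * (norm (y + d))\<^sup>2 + 2 * (norm d)\<^sup>2"
    by (simp add: power2_norm_eq_inner inner_add_left inner_add_right inner_commute algebra_simps)
  have "0 \<le> \<rho>" using assms(1) norm_ge_zero order_trans by blast
  then have "(norm y)\<^sup>2 \<le> \<rho>\<^sup>2" "(norm (y + 2 *\<^sub>R d))\<^sup>2 \<le> \<rho>\<^sup>2" using assms by (auto intro: power_mono)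
  moreover have "0 < (norm d)\<^sup>2" using assms(3) by simp
  ultimately have "(norm (y + d))\<^sup>2 < \<rho>\<^sup>2" using parallelogram by linarith
  then show ?thesis by (rule power2_less_imp_less) (use \<open>0 \<le> \<rho>\<close> in simp)
qed

section \<open>Optimal solutions of the draining problem\<close>

locale draining_optimum =
  fixes A B r R0 T :: real and x s_phi s_psi :: pt
    and u s :: "real \<Rightarrow> pt" and R :: "real \<Rightarrow> real"
  assumes optimal: "draining_optimal A B x r s_phi s_psi R0 T u s R"
    and R0_nonneg: "0 \<le> R0"
begin

lemma feasible: "draining_feasible A B x r s_phi s_psi R0 T u s R"
  using optimal by (simp add: draining_optimal_def)

lemma T_nonneg: "0 \<le> T"
  and s_deriv: "\<forall>t\<in>{0..T}. (s has_vector_derivative u t) (at t within {0..T})"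
  and R_integral: "\<forall>t\<in>{0..T}. ((\<lambda>\<tau>. f_R A B x r (R \<tau>) (s \<tau>)) has_integral (R t - R 0)) {0..t}"
  and s_0: "s 0 = s_phi" and s_T: "s T = s_psi" and R_0: "R 0 = R0"
  using feasible unfolding draining_feasible_def by auto

lemma speed_le_1: "\<forall>t\<in>{0..T}. norm (u t) \<le> 1"
  using feasible unfolding draining_feasible_def by (auto intro: power2_le_imp_le)

lemma norm_s_diff_le: "0 \<le> a \<Longrightarrow> a \<le> b \<Longrightarrow> b \<le> T \<Longrightarrow> norm (s b - s a) \<le> b - a"
  using norm_diff_le_of_speed_le_1[OF s_deriv speed_le_1] .

lemma continuous_on_s: "continuous_on {0..T} s"
  using s_deriv has_vector_derivative_continuous continuous_on_eq_continuous_within by blast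

lemma T_le_of_drained_path:
  assumes "0 \<le> T'" and der: "\<forall>t\<in>{0..T'}. (s' has_vector_derivative u' t) (at t within {0..T'})"
    and speed: "\<forall>t\<in>{0..T'}. norm (u' t) \<le> 1" and "s' 0 = s_phi" and "s' T' = s_psi"
    and "t0 \<in> {0..T'}" and "R0 + integral {0..t0} (\<lambda>\<tau>. free_rate A B x r (s' \<tau>)) \<le> 0"
  shows "T \<le> T'"
proof -
  have "continuous_on {0..T'} s'"
    using der has_vector_derivative_continuous continuous_on_eq_continuous_within by blast
  then obtain R' where "\<forall>t\<in>{0..T'}. ((\<lambda>\<tau>. f_R A B x r (R' \<tau>) (s' \<tau>)) has_integral (R' t - R' 0)) {0..t}"
    "\<forall>\<tau>\<in>{0..T'}. 0 \<le> R' \<tau>" "\<exists>\<tau>\<in>{0..T'}. R' \<tau> = 0" "R' 0 = R0"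
    using exists_feasible_uncertainty[of T' s' R0 t0] assms R0_nonneg by blast
  moreover have "\<forall>t\<in>{0..T'}. (norm (u' t))\<^sup>2 \<le> 1" using speed by (simp add: power_le_one)
  ultimately have "draining_feasible A B x r s_phi s_psi R0 T' u' s' R'"
    unfolding draining_feasible_def using assms by blast
  then show ?thesis using optimal unfolding draining_optimal_def by blast
qed

definition rate :: "real \<Rightarrow> real" where
  "rate t = free_rate A B x r (s t)"

definition unreflected :: "real \<Rightarrow> real" where
  "unreflected t = R0 + integral {0..t} rate"

lemma continuous_on_rate: "continuous_on {0..T} rate"
  unfolding rate_def by (rule continuous_on_free_rate[OF continuous_on_s])

lemma integrable_rate: "0 \<le> a \<Longrightarrow> b \<le> T \<Longrightarrow> rate integrable_on {a..b}"
  by (rule integrable_continuous_interval, rule continuous_on_subset[OF continuous_on_rate]) auto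

lemma unreflected_diff:
  "0 \<le> a \<Longrightarrow> a \<le> b \<Longrightarrow> b \<le> T \<Longrightarrow> unreflected b - unreflected a = integral {a..b} rate"
  using Henstock_Kurzweil_Integration.integral_combine[of 0 a b rate] integrable_rate[of 0 b]
  by (simp add: unreflected_def)

lemma unreflected_deriv: "0 < t \<Longrightarrow> t < T \<Longrightarrow> (unreflected has_real_derivative rate t) (at t)"
proof -
  assume t: "0 < t" "t < T"
  have "((\<lambda>u. integral {0..u} rate) has_real_derivative rate t) (at t within {0..T})"
    by (rule integral_has_real_derivative[OF continuous_on_rate]) (use t in auto)
  then have "((\<lambda>u. integral {0..u} rate) has_real_derivative rate t) (at t)"
    using at_within_Icc_at[of 0 t T] t by simp
  then show ?thesis unfolding unreflected_def[abs_def] by (auto intro!: derivative_eq_intros)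
qed

lemma unreflected_le_R: "t \<in> {0..T} \<Longrightarrow> unreflected t \<le> R t"
proof -
  assume t: "t \<in> {0..T}"
  have "(rate has_integral integral {0..t} rate) {0..t}" using integrable_rate[of 0 t] t by auto
  moreover have "((\<lambda>\<tau>. f_R A B x r (R \<tau>) (s \<tau>)) has_integral (R t - R 0)) {0..t}"
    using R_integral t by auto
  ultimately have "integral {0..t} rate \<le> R t - R 0"
    by (rule has_integral_le) (auto simp: f_R_eq_free_rate rate_def)
  then show ?thesis using R_0 by (simp add: unreflected_def)
qed

lemma rate_eq_0_where_unreflected_const:
  assumes "0 \<le> \<alpha>" "\<beta> \<le> T" and const: "\<forall>t\<in>{\<alpha><..<\<beta>}. unreflected t = c" and t: "t \<in> {\<alpha><..<\<beta>}"
  shows "rate t = 0"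
proof -
  have "\<forall>\<^sub>F y in nhds t. unreflected y = c"
    using eventually_nhds_in_open[OF open_greaterThanLessThan t] by eventually_elim (use const in auto)
  then have "(unreflected has_real_derivative 0) (at t)"
    using DERIV_cong_ev[OF refl _ refl, of unreflected "\<lambda>_. c"] by simp
  moreover have "(unreflected has_real_derivative rate t) (at t)"
    using unreflected_deriv t assms by auto
  ultimately show ?thesis using DERIV_unique by blast
qed

text \<open>Once the target is drained at time \<open>a\<close>, an optimal agent heads straight to \<open>s_psi\<close>:
  otherwise it could follow its path up to \<open>a\<close> and then take a shortcut, glued differentiably
  by a short turn.\<close>

lemma T_le_after_drained:
  assumes a: "0 \<le> a" "a \<le> T" and drained: "unreflected a \<le> 0"
  shows "T \<le> a + norm (s_psi - s a)"
proof (rule field_le_epsilon)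
  fix \<epsilon> :: real assume "0 < \<epsilon>"
  have v: "norm (u a) \<le> 1" and \<delta>: "0 < \<epsilon> / 2" using speed_le_1 a \<open>0 < \<epsilon>\<close> by auto
  obtain L c c' where L: "0 < L" "L \<le> norm (s_psi - s a) + 2 * (\<epsilon> / 2)"
    and c: "c 0 = s a" "c L = s_psi" "c' 0 = u a"
    and c_deriv: "\<And>\<sigma>. (c has_vector_derivative c' \<sigma>) (at \<sigma>)"
    and c_speed: "\<And>\<sigma>. 0 \<le> \<sigma> \<Longrightarrow> norm (c' \<sigma>) \<le> 1"
    using C1_path_with_initial_velocity[where P = "s a" and q = s_psi, OF v \<delta>] by blast
  define s' where "s' t = (if t \<in> {0..a} then s t else c (t - a))" for t
  define u' where "u' t = (if t \<in> {0..a} then u t else c' (t - a))" for t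
  have "T \<le> a + L"
  proof (rule T_le_of_drained_path)
    show "\<forall>t\<in>{0..a + L}. (s' has_vector_derivative u' t) (at t within {0..a + L})"
    proof
      fix t assume t: "t \<in> {0..a + L}"
      have closures: "{0..a} \<union> closure {0..a} \<inter> closure {a<..a + L} = {0..a}"
        "{a<..a + L} \<union> closure {0..a} \<inter> closure {a<..a + L} = {a..a + L}"
        using a L by auto
      have "((\<lambda>t. t - a) has_vector_derivative 1) (at t)"
        unfolding has_real_derivative_iff_has_vector_derivative[symmetric]
        by (auto intro!: derivative_eq_intros)
      then have "((c \<circ> (\<lambda>t. t - a)) has_vector_derivative 1 *\<^sub>R c' (t - a)) (at t)"
        using vector_diff_chain_at c_deriv by blast
      then have c_shifted: "((\<lambda>t. c (t - a)) has_vector_derivative c' (t - a)) (at t)"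
        by (simp add: o_def)
      have "(s' has_vector_derivative u' t) (at t within {0..a} \<union> {a<..a + L})"
        unfolding s'_def u'_def
      proof (rule has_vector_derivative_If_within_closures[OF _ refl])
        show "t \<in> {0..a} \<union> {a<..a + L}" using t by auto
        show "(s has_vector_derivative u t) (at t within {0..a} \<union> closure {0..a} \<inter> closure {a<..a + L})"
          if "t \<in> {0..a} \<union> closure {0..a} \<inter> closure {a<..a + L}"
          unfolding closures(1)
          by (rule has_vector_derivative_within_subset[of _ _ _ "{0..T}"])
            (use that s_deriv a in \<open>auto simp: closures(1)\<close>)
        show "((\<lambda>t. c (t - a)) has_vector_derivative c' (t - a))
            (at t within {a<..a + L} \<union> closure {0..a} \<inter> closure {a<..a + L})"
          using c_shifted by (rule has_vector_derivative_at_within)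
        show "s t = c (t - a)" "u t = c' (t - a)"
          if "t \<in> closure {0..a}" "t \<in> closure {a<..a + L}"
          using that a L c by auto
      qed
      moreover have "{0..a} \<union> {a<..a + L} = {0..a + L}" using a L by auto
      ultimately show "(s' has_vector_derivative u' t) (at t within {0..a + L})" by simp
    qed
    show "\<forall>t\<in>{0..a + L}. norm (u' t) \<le> 1"
      using speed_le_1 c_speed a by (auto simp: u'_def)
    show "s' 0 = s_phi" "s' (a + L) = s_psi" using a L s_0 c by (auto simp: s'_def)
    have "integral {0..a} (\<lambda>\<tau>. free_rate A B x r (s' \<tau>)) = integral {0..a} rate"
      by (rule integral_cong) (simp add: s'_def rate_def)
    then show "R0 + integral {0..a} (\<lambda>\<tau>. free_rate A B x r (s' \<tau>)) \<le> 0"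
      using drained by (simp add: unreflected_def)
  qed (use a L in auto)
  with L show "T \<le> a + norm (s_psi - s a) + \<epsilon>" by simp
qed

lemma straight_after_drained:
  assumes a: "0 \<le> a" "a < T" and drained: "unreflected a \<le> 0"
  obtains e where "norm e = 1" and "\<And>t. t \<in> {a..T} \<Longrightarrow> s t = s a + (t - a) *\<^sub>R e"
proof
  have "norm (s T - s a) \<le> T - a" using norm_s_diff_le a by simp
  then have dist: "norm (s T - s a) = T - a"
    using T_le_after_drained[OF a(1) _ drained] a s_T by simp
  then show "norm ((1 / (T - a)) *\<^sub>R (s T - s a)) = 1" using a by simp
  fix t assume "t \<in> {a..T}"
  then have "s t = s a + ((t - a) / (T - a)) *\<^sub>R (s T - s a)"
    by (intro segment_of_norm_diff_eq[OF _ a(2) dist] norm_s_diff_le) (use a in auto)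
  then show "s t = s a + (t - a) *\<^sub>R ((1 / (T - a)) *\<^sub>R (s T - s a))" by simp
qed

definition shortcut :: "real \<Rightarrow> real \<Rightarrow> pt" where
  "shortcut \<theta> t = (1 - \<theta>) *\<^sub>R s t + \<theta> *\<^sub>R (s_phi + (t / T) *\<^sub>R (s_psi - s_phi))"

lemma free_rate_shortcut_le:
  assumes "0 < r" "0 < T" "0 \<le> \<theta>" and t: "t \<in> {0..T}"
  shows "free_rate A B x r (shortcut \<theta> t) \<le> rate t + \<theta> * (4 * \<bar>B\<bar> * T / r)"
proof -
  have "norm (s_phi + (t / T) *\<^sub>R (s_psi - s_phi) - s t)
      \<le> norm ((t / T) *\<^sub>R (s_psi - s_phi)) + norm (s t - s 0)"
    using norm_triangle_ineq4[of "(t / T) *\<^sub>R (s_psi - s_phi)" "s t - s 0"] s_0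
    by (simp add: algebra_simps)
  also have "norm ((t / T) *\<^sub>R (s_psi - s_phi)) \<le> 1 * T"
    using t assms norm_s_diff_le[of 0 T] s_0 s_T
    by (auto intro!: mult_mono simp: divide_le_eq norm_minus_commute)
  also have "norm (s t - s 0) \<le> T" using norm_s_diff_le[of 0 t] t by auto
  finally have "\<theta> * norm (s_phi + (t / T) *\<^sub>R (s_psi - s_phi) - s t) \<le> \<theta> * (2 * T)"
    using assms by (intro mult_left_mono) auto
  moreover have "shortcut \<theta> t - s t = \<theta> *\<^sub>R (s_phi + (t / T) *\<^sub>R (s_psi - s_phi) - s t)"
    by (simp add: shortcut_def algebra_simps)
  ultimately have "norm (shortcut \<theta> t - s t) \<le> \<theta> * (2 * T)" using assms by simp
  then have "2 * \<bar>B\<bar> / r * norm (shortcut \<theta> t - s t) \<le> 2 * \<bar>B\<bar> / r * (\<theta> * (2 * T))"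
    using assms by (intro mult_left_mono) auto
  moreover have "2 * \<bar>B\<bar> / r * (\<theta> * (2 * T)) = \<theta> * (4 * \<bar>B\<bar> * T / r)" by simp
  ultimately show ?thesis
    using free_rate_lipschitz[OF \<open>0 < r\<close>, of A B x "shortcut \<theta> t" "s t"] unfolding rate_def
    by linarith
qed

lemma unreflected_shortcut_le:
  assumes "0 < r" "0 < T" "0 \<le> \<theta>" "\<theta> \<le> 1/2" and t0: "t0 \<in> {0..T}"
    and \<kappa>_def: "\<kappa> = 1 - \<theta> * (1 - norm (s_psi - s_phi) / T)" and "0 < \<kappa>"
  shows "R0 + integral {0..\<kappa> * t0} (\<lambda>\<sigma>. free_rate A B x r (shortcut \<theta> (\<sigma> / \<kappa>)))
    \<le> unreflected t0 + \<theta> * (t0 * (4 * \<bar>B\<bar> * T / r + \<bar>A\<bar> + \<bar>B\<bar>))"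
proof -
  define I where "I = integral {0..t0} (\<lambda>t. free_rate A B x r (shortcut \<theta> t))"
  have "continuous_on {0..T} (shortcut \<theta>)"
    unfolding shortcut_def by (intro continuous_intros continuous_on_s) (use assms in auto)
  then have "continuous_on {0..t0} (shortcut \<theta>)" by (rule continuous_on_subset) (use t0 in auto)
  then have int: "(\<lambda>t. free_rate A B x r (shortcut \<theta> t)) integrable_on {0..t0}"
    by (intro integrable_continuous_interval continuous_on_free_rate)
  have "I \<le> integral {0..t0} (\<lambda>t. rate t + \<theta> * (4 * \<bar>B\<bar> * T / r))"
    unfolding I_def using free_rate_shortcut_le[OF assms(1-3)] t0
    by (intro integral_le int integrable_add integrable_rate integrable_const_ivl) auto
  also have "\<dots> = integral {0..t0} rate + t0 * (\<theta> * (4 * \<bar>B\<bar> * T / r))"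
    using t0 integrable_rate[of 0 t0] by (simp add: integral_add integrable_const_ivl)
  finally have I_le: "I \<le> integral {0..t0} rate + t0 * (\<theta> * (4 * \<bar>B\<bar> * T / r))" .
  have "integral {0..t0} (\<lambda>_. - (\<bar>A\<bar> + \<bar>B\<bar>)) \<le> I"
    unfolding I_def using free_rate_lower_bound by (intro integral_le int integrable_const_ivl) auto
  then have I_ge: "- I \<le> t0 * (\<bar>A\<bar> + \<bar>B\<bar>)" using t0 by (simp add: algebra_simps)
  define \<mu> where "\<mu> = \<theta> * (1 - norm (s_psi - s_phi) / T)"
  have \<mu>: "0 \<le> \<mu>" "\<mu> \<le> \<theta>"
    using assms norm_s_diff_le[of 0 T] s_0 s_T by (auto simp: \<mu>_def mult_left_le divide_le_eq)
  have "\<mu> * (- I) \<le> \<mu> * (t0 * (\<bar>A\<bar> + \<bar>B\<bar>))" by (rule mult_left_mono[OF I_ge \<mu>(1)])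
  also have "\<dots> \<le> \<theta> * (t0 * (\<bar>A\<bar> + \<bar>B\<bar>))" by (rule mult_right_mono[OF \<mu>(2)]) (use t0 in auto)
  finally have "\<mu> * (- I) \<le> \<theta> * (t0 * (\<bar>A\<bar> + \<bar>B\<bar>))" .
  then have "\<kappa> * I \<le> I + \<theta> * (t0 * (\<bar>A\<bar> + \<bar>B\<bar>))" by (simp add: \<kappa>_def \<mu>_def algebra_simps)
  moreover have "integral {0..\<kappa> * t0} (\<lambda>\<sigma>. free_rate A B x r (shortcut \<theta> (\<sigma> / \<kappa>))) = \<kappa> * I"
    unfolding I_def using integral_rescale_real[OF \<open>0 < \<kappa>\<close>, of t0] t0 by simp
  ultimately show ?thesis
    using I_le by (simp add: unreflected_def algebra_simps)
qed

lemma T_eq_dist_if_drained_strictly: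
  assumes "0 < r" and t0: "t0 \<in> {0..T}" and strict: "unreflected t0 < 0"
  shows "T = norm (s_psi - s_phi)"
proof (rule ccontr)
  define D where "D = norm (s_psi - s_phi)"
  have "D \<le> T" using norm_s_diff_le[of 0 T] T_nonneg s_0 s_T by (simp add: D_def)
  moreover assume "T \<noteq> norm (s_psi - s_phi)"
  ultimately have "D < T" by (simp add: D_def)
  then have "0 < T" using norm_ge_zero[of "s_psi - s_phi"] unfolding D_def by linarith
  define C where "C = t0 * (4 * \<bar>B\<bar> * T / r + \<bar>A\<bar> + \<bar>B\<bar>)"
  have "0 \<le> C" using t0 \<open>0 < r\<close> \<open>0 < T\<close> by (simp add: C_def)
  define \<theta> where "\<theta> = min (1/2) (- unreflected t0 / (C + 1))"
  have "0 < - unreflected t0 / (C + 1)" using strict \<open>0 \<le> C\<close> by (simp add: divide_neg_pos)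
  then have \<theta>: "0 < \<theta>" "\<theta> \<le> 1/2" unfolding \<theta>_def by (auto simp: min_def)
  have "\<theta> * (C + 1) \<le> - unreflected t0"
    using \<open>0 \<le> C\<close> by (simp add: \<theta>_def min_le_iff_disj pos_le_divide_eq[symmetric])
  then have small: "unreflected t0 + \<theta> * C < 0" using \<theta> by (simp add: algebra_simps)
  define \<kappa> where "\<kappa> = 1 - \<theta> * (1 - D / T)"
  define u' where "u' \<sigma> = (1 / \<kappa>) *\<^sub>R ((1 - \<theta>) *\<^sub>R u (\<sigma> / \<kappa>) + (\<theta> / T) *\<^sub>R (s T - s 0))" for \<sigma>
  have \<kappa>_eq: "\<kappa> = 1 - \<theta> * (1 - norm (s T - s 0) / T)" by (simp add: \<kappa>_def D_def s_0 s_T)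
  note path = convex_shortcut_path[OF \<open>0 < T\<close> s_deriv speed_le_1 less_imp_le[OF \<theta>(1)] \<theta>(2) \<kappa>_eq,
      folded u'_def]
  have shortcut_deriv: "\<forall>\<sigma>\<in>{0..\<kappa> * T}.
      ((\<lambda>\<sigma>. shortcut \<theta> (\<sigma> / \<kappa>)) has_vector_derivative u' \<sigma>) (at \<sigma> within {0..\<kappa> * T})"
    using path(2) by (simp add: shortcut_def s_0 s_T)
  have "\<kappa> < 1" using \<theta> \<open>D < T\<close> \<open>0 < T\<close> by (simp add: \<kappa>_def)
  have "T \<le> \<kappa> * T"
  proof (rule T_le_of_drained_path[OF _ shortcut_deriv path(3)])
    show "0 \<le> \<kappa> * T" "\<kappa> * t0 \<in> {0..\<kappa> * T}"
      using path(1) t0 \<open>0 < T\<close> by (auto intro: mult_left_mono)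
    show "shortcut \<theta> (0 / \<kappa>) = s_phi" by (simp add: shortcut_def s_0)
    show "shortcut \<theta> (\<kappa> * T / \<kappa>) = s_psi"
      using path(1) \<open>0 < T\<close> by (simp add: shortcut_def s_T algebra_simps)
    show "R0 + integral {0..\<kappa> * t0} (\<lambda>\<sigma>. free_rate A B x r (shortcut \<theta> (\<sigma> / \<kappa>))) \<le> 0"
      using unreflected_shortcut_le[OF \<open>0 < r\<close> \<open>0 < T\<close> _ \<theta>(2) t0 _ path(1)] \<theta> small
      by (simp add: \<kappa>_def D_def C_def)
  qed
  with \<open>\<kappa> < 1\<close> \<open>0 < T\<close> show False by simp
qed

text \<open>A line meets a circle in at most two points, so a straight path cannot stay at constant
  distance from the target.\<close>

lemma no_drained_interval_if_A_pos:
  assumes "0 < r" "0 < A" "A < B" and ab: "0 \<le> a" "a < b" "b \<le> T"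
    and zero: "\<forall>t\<in>{a<..<b}. unreflected t = 0"
  shows False
proof -
  have rate_0: "rate t = 0" if "t \<in> {a<..<b}" for t
    using rate_eq_0_where_unreflected_const[OF ab(1) ab(3) zero that] .
  define h where "h = (b - a) / 4"
  have h: "0 < h" and pts: "\<And>k. k \<in> {1, 2, 3} \<Longrightarrow> a + k * h \<in> {a<..<b}"
    using ab by (auto simp: h_def field_simps)
  have sens: "sens_p x r (s t) = A / B" if "t \<in> {a<..<b}" for t
    using free_rate_eq_zero[OF \<open>A < B\<close>] rate_0[OF that] by (simp add: rate_def)
  have "0 < A / B" using assms by simp
  have same_dist: "norm (s (a + k * h) - x) = norm (s (a + h) - x)" if "k \<in> {1, 2, 3}" for k
    using sens_p_eq_imp_norm_eq[OF \<open>0 < r\<close>] sens pts[OF that] pts[of 1] \<open>0 < A / B\<close> by simp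
  have "unreflected (a + h) \<le> 0" using zero pts[of 1] by simp
  moreover have "0 \<le> a + h" "a + h < T" using pts[of 1] ab h by auto
  ultimately obtain e where "norm e = 1"
    and line: "\<And>t. t \<in> {a + h..T} \<Longrightarrow> s t = s (a + h) + (t - (a + h)) *\<^sub>R e"
    using straight_after_drained by blast
  then have shifted: "s (a + k * h) - x = (s (a + h) - x) + ((k - 1) * h) *\<^sub>R e" if "k \<in> {2, 3}" for k
    using line[of "a + k * h"] pts[of k] that ab by (auto simp: algebra_simps)
  have "(2 - 1) * h = h" "(3 - 1) * h = 2 * h" by simp_all
  then have "norm ((s (a + h) - x) + h *\<^sub>R e) = norm (s (a + h) - x)"
    and "norm ((s (a + h) - x) + 2 *\<^sub>R (h *\<^sub>R e)) = norm (s (a + h) - x)"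
    using same_dist[of 2] same_dist[of 3] shifted[of 2] shifted[of 3] by simp_all
  moreover have "h *\<^sub>R e \<noteq> 0" using h \<open>norm e = 1\<close> by auto
  ultimately show False using norm_midpoint_less[of "s (a + h) - x" "norm (s (a + h) - x)" "h *\<^sub>R e"]
    by simp
qed

text \<open>If \<open>A = 0\<close> the uncertainty can only decrease, and only inside the sensing disk. Draining it
  exactly to \<open>0\<close> forces the agent, from the last time \<open>\<tau>\<close> it was in the closed disk, to run
  straight to the circle while staying outside the open disk, which a chord cannot do.\<close>

lemma no_drained_interval_if_A_zero:
  assumes "0 < r" "A = 0" "0 < B"
    and phi: "norm (s_phi - x) = r" and psi: "norm (s_psi - x) = r"
    and nonneg: "\<forall>t\<in>{0..T}. 0 \<le> unreflected t"
    and a0: "0 \<le> a0" "a0 < T" and zero: "unreflected a0 = 0"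
  shows False
proof -
  have rate_nonpos: "rate t \<le> 0" for t
    unfolding rate_def free_rate_def using sens_p_bounds[of x r "s t"] assms(2,3) by simp
  have rate_0: "rate t = 0" if "r < norm (s t - x)" for t
    unfolding rate_def free_rate_def using that \<open>0 < r\<close> assms(2)
    by (simp add: sens_p_def field_simps power_strict_mono)
  define S where "S = {0..a0} \<inter> (\<lambda>t. norm (s t - x)) -` {..r}"
  have "continuous_on {0..a0} (\<lambda>t. norm (s t - x))"
    using continuous_on_subset[OF continuous_on_s, of "{0..a0}"] a0
    by (intro continuous_intros) auto
  then have "closed S" unfolding S_def by (rule continuous_closed_preimage) auto
  moreover have "0 \<in> S" using a0 s_0 phi by (simp add: S_def)
  moreover have "bdd_above S" by (auto simp: S_def bdd_above_def)
  ultimately have "Sup S \<in> S" by (auto intro: closed_contains_Sup)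
  define \<tau> where "\<tau> = Sup S"
  have \<tau>: "0 \<le> \<tau>" "\<tau> \<le> a0" "norm (s \<tau> - x) \<le> r" using \<open>Sup S \<in> S\<close> by (auto simp: S_def \<tau>_def)
  have "rate t = 0" if "t \<in> {\<tau><..a0}" for t
    using that cSup_upper[OF _ \<open>bdd_above S\<close>, of t] \<tau> rate_0 by (force simp: S_def \<tau>_def)
  then have "integral {\<tau>..a0} rate = integral {\<tau>..a0} (\<lambda>_. 0)"
    by (intro integral_spike[of "{\<tau>}"]) auto
  then have "unreflected \<tau> = 0" using unreflected_diff[OF \<tau>(1,2)] a0 zero by simp
  have zero_after: "unreflected t = 0" if "t \<in> {\<tau><..<T}" for t
  proof -
    have "integral {\<tau>..t} rate \<le> integral {\<tau>..t} (\<lambda>_. 0)"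
      using that \<tau> rate_nonpos by (intro integral_le integrable_rate) auto
    then have "unreflected t \<le> 0"
      using unreflected_diff[of \<tau> t] that \<tau> \<open>unreflected \<tau> = 0\<close> by simp
    moreover have "0 \<le> unreflected t" using nonneg that \<tau> by simp
    ultimately show ?thesis by simp
  qed
  have outside: "r \<le> norm (s t - x)" if "t \<in> {\<tau><..<T}" for t
  proof (rule r_le_norm_if_sens_p_eq_0[OF \<open>0 < r\<close>])
    have "free_rate A B x r (s t) = 0"
      using rate_eq_0_where_unreflected_const[OF \<tau>(1) order_refl _ that] zero_after
      unfolding rate_def by blast
    then show "sens_p x r (s t) = 0" unfolding free_rate_def using assms(2,3) by simp
  qed
  obtain e where "norm e = 1" and line: "\<And>t. t \<in> {\<tau>..T} \<Longrightarrow> s t = s \<tau> + (t - \<tau>) *\<^sub>R e"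
    using straight_after_drained \<tau> a0 \<open>unreflected \<tau> = 0\<close> by (metis order_refl le_less_trans)
  define d where "d = ((T - \<tau>) / 2) *\<^sub>R e"
  have "2 *\<^sub>R d = (T - \<tau>) *\<^sub>R e" by (simp add: d_def)
  then have end_eq: "s T - x = (s \<tau> - x) + 2 *\<^sub>R d" using line[of T] \<tau> a0 by simp
  have "(\<tau> + T) / 2 - \<tau> = (T - \<tau>) / 2" by simp
  then have mid_eq: "s ((\<tau> + T) / 2) - x = (s \<tau> - x) + d"
    using line[of "(\<tau> + T) / 2"] \<tau> a0 by (simp add: d_def)
  have "d \<noteq> 0" using \<open>norm e = 1\<close> \<tau> a0 by (auto simp: d_def)
  have "norm ((s \<tau> - x) + 2 *\<^sub>R d) \<le> r" unfolding end_eq[symmetric] using psi s_T by simp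
  then have "norm (s ((\<tau> + T) / 2) - x) < r"
    unfolding mid_eq by (rule norm_midpoint_less[OF \<tau>(3) _ \<open>d \<noteq> 0\<close>])
  moreover have "(\<tau> + T) / 2 \<in> {\<tau><..<T}" using \<tau> a0 by simp
  ultimately show False using outside by fastforce
qed

lemma unreflected_neg_somewhere:
  assumes "0 < r" "A < B" and phi: "norm (s_phi - x) = r" and psi: "norm (s_psi - x) = r"
    and t12: "0 \<le> t1" "t1 < t2" "t2 \<le> T" and R_zero: "\<forall>t\<in>{t1<..<t2}. R t = 0"
  shows "\<exists>t0\<in>{0..T}. unreflected t0 < 0"
proof (rule ccontr)
  assume "\<not> ?thesis"
  then have nonneg: "\<forall>t\<in>{0..T}. 0 \<le> unreflected t" by (auto simp: not_less)
  have zero: "\<forall>t\<in>{t1<..<t2}. unreflected t = 0"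
  proof
    fix t assume t: "t \<in> {t1<..<t2}"
    then have "unreflected t \<le> 0" using unreflected_le_R[of t] R_zero t12 by auto
    moreover have "0 \<le> unreflected t" using nonneg t t12 by auto
    ultimately show "unreflected t = 0" by simp
  qed
  define a0 where "a0 = (t1 + t2) / 2"
  have a0: "a0 \<in> {t1<..<t2}" using t12 by (simp add: a0_def)
  have "free_rate A B x r (s a0) = 0"
    using rate_eq_0_where_unreflected_const[OF t12(1,3) zero a0] by (simp add: rate_def)
  then have "0 < B" "0 \<le> A" using free_rate_eq_zero[OF \<open>A < B\<close>] by auto
  then consider "0 < A" | "A = 0" by linarith
  then show False
  proof cases
    case 1
    show False by (rule no_drained_interval_if_A_pos[OF \<open>0 < r\<close> 1 \<open>A < B\<close> t12 zero])
  next
    case 2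
    show False
      by (rule no_drained_interval_if_A_zero[OF \<open>0 < r\<close> 2 \<open>0 < B\<close> phi psi nonneg, of a0])
        (use a0 t12 zero in auto)
  qed
qed

lemma u_eq_if_T_eq_dist:
  assumes "0 < T" and T_eq: "T = norm (s_psi - s_phi)" and t: "t \<in> {0..T}"
  shows "u t = (1 / T) *\<^sub>R (s_psi - s_phi)"
proof -
  have line: "s t' = s_phi + (t' / T) *\<^sub>R (s_psi - s_phi)" if "t' \<in> {0..T}" for t'
    using segment_of_norm_diff_eq[of 0 T s t'] norm_s_diff_le \<open>0 < T\<close> T_eq s_0 s_T that by simp
  have "((\<lambda>t. t / T) has_real_derivative 1 / T) (at t within {0..T})"
    using \<open>0 < T\<close> by (auto intro!: derivative_eq_intros)
  then have "((\<lambda>t. s_phi + (t / T) *\<^sub>R (s_psi - s_phi))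
      has_vector_derivative (1 / T) *\<^sub>R (s_psi - s_phi)) (at t within {0..T})"
    using \<open>0 < T\<close>
    by (auto intro!: derivative_eq_intros simp: has_real_derivative_iff_has_vector_derivative)
  then have "(s has_vector_derivative (1 / T) *\<^sub>R (s_psi - s_phi)) (at t within {0..T})"
    by (rule has_vector_derivative_transform[rotated 2]) (use t line in auto)
  moreover have "(s has_vector_derivative u t) (at t within {0..T})" using s_deriv t by auto
  ultimately show ?thesis
    using vector_derivative_unique_within_closed_interval[of 0 T t s] \<open>0 < T\<close> t by auto
qed

end

theorem corollary1:
  fixes A B r R0 T t1 t2 :: real and x s_phi s_psi :: pt
    and u s :: "real \<Rightarrow> pt" and R :: "real \<Rightarrow> real"
  assumes "0 < r" and "A < B"
    and "norm (s_phi - x) = r" and "norm (s_psi - x) = r"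
    and "0 \<le> R0"
    and "draining_optimal A B x r s_phi s_psi R0 T u s R"
    and "0 \<le> t1" and "t1 < t2" and "t2 \<le> T"
    and "\<forall>t\<in>{t1<..<t2}. R t = 0"
  shows "T = norm (s_psi - s_phi) \<and>
         (\<forall>t\<in>{0..T}. u t = (1 / T) *\<^sub>R (s_psi - s_phi))"
proof -
  interpret draining_optimum A B r R0 T x s_phi s_psi u s R
    using assms(5,6) by unfold_locales
  obtain t0 where "t0 \<in> {0..T}" "unreflected t0 < 0"
    using unreflected_neg_somewhere assms by blast
  then have "T = norm (s_psi - s_phi)" using T_eq_dist_if_drained_strictly \<open>0 < r\<close> by blast
  moreover have "0 < T" using assms(7-9) by linarith
  ultimately show ?thesis using u_eq_if_T_eq_dist by blast
qed

end
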